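(* Let $\gamma>0$ and assume the Hamiltonians satisfy (H) and $\min_{\mathbb R}H_\alpha=H_\alpha(0)$ for every $\alpha$. Then there exists a vertex test function $G:J^2\to\mathbb R$ associated with the parameter $\gamma$ and the flux limiter $A=A_0+\gamma$ (i.e. satisfying (i)-(vi) below) which moreover, for every $K>0$, is $C^{1,1}$ on $J_K^2=\{(x,y)\in J^2:d(x,y)\le K\}$ (on each piece $(J_\alpha\times J_\beta)\cap J_K^2$) with $$\|D^2G\|_{L^\infty(J_K^2)}\le\frac{C_K}{\gamma},$$ where $C_K$ depends only on $K$ and the Hamiltonians. Vertex test function properties: (i) $G\in C(J^2)$, $G(x,\cdot)\in C^1(J)$ and $G(\cdot,y)\in C^1(J)$ for all $x,y$; (ii) $G\ge0=G(0,0)$; (iii) $0\le G(x,x)\le\gamma$ for all $x\in J$; (iv) $\mathbf H(y,-G_y(x,y))-\mathbf H(x,G_x(x,y))\le\gamma$ for all $(x,y)\in J^2$; (v) there is a non-decreasing $g:[0,\infty)\to\mathbb R$ with $g(d(x,y))\le G(x,y)$ and $g(a)/a\to+\infty$ as $a\to+\infty$; (vi) for every $K\ge0$ there is $C_K'$ with $|G_x(x,y)|+|G_y(x,y)|\le C_K'$ whenever $d(x,y)\le K$.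
   Context: Junction: $N\ge1$, $J=\bigcup_{\alpha=1}^NJ_\alpha$, $N$ copies of $[0,\infty)$ glued at $0$; points of $J_\alpha$ identified with their coordinate; $d(x,y)=|x-y|$ on the same branch, $|x|+|y|$ otherwise. A function on $J$ is $C^1(J)$ if it is continuous and $C^1$ on each branch (one-sided at $0$); its gradient is the branch derivative off $0$ and the vector $(\partial_1,\dots,\partial_N)$ of branch derivatives at $0$. $G_x,G_y$ denote these gradients in the first/second variable. Hamiltonians (H): $H_\alpha:\mathbb R\to\mathbb R$ Lipschitz continuous, coercive, quasi-convex (sublevel sets convex). $H_\alpha^-(p)=H_\alpha(\min(p,0))$, $H_\alpha^+(p)=H_\alpha(\max(p,0))$ (since $0$ is a minimum point). $A_0=\max_\alpha\min_{\mathbb R}H_\alpha$. $F_A(p)=\max(A,\max_\alpha H_\alpha^-(p_\alpha))$. Shorthand: $\mathbf H(x,p)=H_\alpha(p)$ for $x\in J_\alpha\setminus\{0\}$, $\mathbf H(0,p)=F_A(p)$ for $p\in\mathbb R^N$, with $A=A_0+\gamma$. *)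

theory Defs
  imports "HOL-Analysis.Analysis"
begin

text \<open>The junction J with N branches. A point is a pair (branch index, coordinate),
  branches indexed by 0..N-1; the vertex is represented canonically by (0,0).\<close>

type_synonym jpoint = "nat \<times> real"

definition J :: "nat \<Rightarrow> jpoint set" where
  "J N = {(a, t). a < N \<and> t > 0} \<union> {(0, 0)}"

definition jpt :: "nat \<Rightarrow> real \<Rightarrow> jpoint" where
  "jpt \<alpha> t = (if t = 0 then (0, 0) else (\<alpha>, t))"

definition dJ :: "jpoint \<Rightarrow> jpoint \<Rightarrow> real" where
  "dJ x y = (if fst x = fst y then \<bar>snd x - snd y\<bar> else snd x + snd y)"

definition bderiv :: "(jpoint \<Rightarrow> real) \<Rightarrow> nat \<Rightarrow> real \<Rightarrow> real" where
  "bderiv u \<alpha> t = (THE D. ((\<lambda>s. u (jpt \<alpha> s)) has_real_derivative D) (at t within {0..}))"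

definition C1J :: "nat \<Rightarrow> (jpoint \<Rightarrow> real) \<Rightarrow> bool" where
  "C1J N u \<longleftrightarrow> (\<forall>\<alpha><N.
      continuous_on {0..} (\<lambda>t. u (jpt \<alpha> t)) \<and>
      (\<forall>t\<ge>0. ((\<lambda>s. u (jpt \<alpha> s)) has_real_derivative bderiv u \<alpha> t) (at t within {0..})) \<and>
      continuous_on {0..} (bderiv u \<alpha>))"

text \<open>Gradient: off the vertex the branch derivative (stored in every component;
  only the component of the current branch is used), at the vertex the vector of
  branch derivatives (components 0..N-1).\<close>
definition grad :: "(jpoint \<Rightarrow> real) \<Rightarrow> jpoint \<Rightarrow> nat \<Rightarrow> real" where
  "grad u x = (\<lambda>\<beta>. if snd x = 0 then bderiv u \<beta> 0 else bderiv u (fst x) (snd x))"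

definition gnorm :: "nat \<Rightarrow> (nat \<Rightarrow> real) \<Rightarrow> real" where
  "gnorm N p = Max ((\<lambda>\<beta>. \<bar>p \<beta>\<bar>) ` {..<N})"

definition hamiltonians :: "nat \<Rightarrow> (nat \<Rightarrow> real \<Rightarrow> real) \<Rightarrow> bool" where
  "hamiltonians N H \<longleftrightarrow> (\<forall>\<alpha><N.
      (\<exists>L. lipschitz_on L UNIV (H \<alpha>)) \<and>
      filterlim (H \<alpha>) at_top at_infinity \<and>
      (\<forall>c. convex {p. H \<alpha> p \<le> c}))"

definition A0 :: "nat \<Rightarrow> (nat \<Rightarrow> real \<Rightarrow> real) \<Rightarrow> real" where
  "A0 N H = Max ((\<lambda>\<alpha>. Inf (range (H \<alpha>))) ` {..<N})"

definition FA :: "nat \<Rightarrow> (nat \<Rightarrow> real \<Rightarrow> real) \<Rightarrow> real \<Rightarrow> (nat \<Rightarrow> real) \<Rightarrow> real" where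
  "FA N H A p = max A (Max ((\<lambda>\<alpha>. H \<alpha> (min (p \<alpha>) 0)) ` {..<N}))"

definition Hb :: "nat \<Rightarrow> (nat \<Rightarrow> real \<Rightarrow> real) \<Rightarrow> real \<Rightarrow> jpoint \<Rightarrow> (nat \<Rightarrow> real) \<Rightarrow> real" where
  "Hb N H A x p = (if snd x = 0 then FA N H A p else H (fst x) (p (fst x)))"

definition vertex_test ::
  "nat \<Rightarrow> (nat \<Rightarrow> real \<Rightarrow> real) \<Rightarrow> real \<Rightarrow> (jpoint \<Rightarrow> jpoint \<Rightarrow> real) \<Rightarrow> bool" where
  "vertex_test N H \<gamma> G \<longleftrightarrow>
    \<comment> \<open>(i)\<close>
    (\<forall>\<alpha><N. \<forall>\<beta><N. continuous_on ({0..} \<times> {0..})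
        (\<lambda>z. G (jpt \<alpha> (fst z)) (jpt \<beta> (snd z)))) \<and>
    (\<forall>x\<in>J N. C1J N (G x)) \<and> (\<forall>y\<in>J N. C1J N (\<lambda>x. G x y)) \<and>
    \<comment> \<open>(ii)\<close>
    (\<forall>x\<in>J N. \<forall>y\<in>J N. 0 \<le> G x y) \<and> G (0, 0) (0, 0) = 0 \<and>
    \<comment> \<open>(iii)\<close>
    (\<forall>x\<in>J N. 0 \<le> G x x \<and> G x x \<le> \<gamma>) \<and>
    \<comment> \<open>(iv)\<close>
    (\<forall>x\<in>J N. \<forall>y\<in>J N.
       Hb N H (A0 N H + \<gamma>) y (\<lambda>\<beta>. - grad (G x) y \<beta>)
       - Hb N H (A0 N H + \<gamma>) x (grad (\<lambda>x'. G x' y) x) \<le> \<gamma>) \<and>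
    \<comment> \<open>(v)\<close>
    (\<exists>g. mono_on {0..} g \<and> (\<forall>x\<in>J N. \<forall>y\<in>J N. g (dJ x y) \<le> G x y) \<and>
         filterlim (\<lambda>a. g a / a) at_top at_top) \<and>
    \<comment> \<open>(vi)\<close>
    (\<forall>K\<ge>0. \<exists>C. \<forall>x\<in>J N. \<forall>y\<in>J N. dJ x y \<le> K \<longrightarrow>
        gnorm N (grad (\<lambda>x'. G x' y) x) + gnorm N (grad (G x) y) \<le> C)"

definition piece :: "nat \<Rightarrow> nat \<Rightarrow> real \<Rightarrow> (real \<times> real) set" where
  "piece \<alpha> \<beta> K = {z. fst z \<ge> 0 \<and> snd z \<ge> 0 \<and> dJ (jpt \<alpha> (fst z)) (jpt \<beta> (snd z)) \<le> K}"

definition DG :: "(jpoint \<Rightarrow> jpoint \<Rightarrow> real) \<Rightarrow> nat \<Rightarrow> nat \<Rightarrow> real \<times> real \<Rightarrow> real \<times> real" where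
  "DG G \<alpha> \<beta> z = (bderiv (\<lambda>x. G x (jpt \<beta> (snd z))) \<alpha> (fst z),
                  bderiv (G (jpt \<alpha> (fst z))) \<beta> (snd z))"

text \<open>G is C^{1,1} on each piece of J_K^2 with second derivatives bounded by M,
  expressed as: G is differentiable on the (convex) piece with gradient DG, and the
  gradient is M-Lipschitz (Euclidean norm).\<close>
definition C11_on :: "nat \<Rightarrow> (jpoint \<Rightarrow> jpoint \<Rightarrow> real) \<Rightarrow> real \<Rightarrow> real \<Rightarrow> bool" where
  "C11_on N G K M \<longleftrightarrow> (\<forall>\<alpha><N. \<forall>\<beta><N.
     (\<forall>z\<in>piece \<alpha> \<beta> K.
        ((\<lambda>w. G (jpt \<alpha> (fst w)) (jpt \<beta> (snd w))) has_derivative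
           (\<lambda>h. fst h * fst (DG G \<alpha> \<beta> z) + snd h * snd (DG G \<alpha> \<beta> z)))
        (at z within piece \<alpha> \<beta> K)) \<and>
     (\<forall>z\<in>piece \<alpha> \<beta> K. \<forall>w\<in>piece \<alpha> \<beta> K.
        norm (DG G \<alpha> \<beta> z - DG G \<alpha> \<beta> w) \<le> M * norm (z - w)))"

end

theory Submission
  imports Defs
begin

text \<open>
  Let \<open>h\<close> be the lower envelope of the \<open>H\<^sub>\<alpha>\<close>; it is non-decreasing on \<open>[0,\<infinity>)\<close>, Lipschitz
  and coercive. Everything is built from one non-decreasing profile \<open>\<phi>\<close>: on \<open>[0,\<infinity>)\<close> it is the
  line of slope \<open>M = a\<^sup>2/(2\<gamma>)\<close> through \<open>(u\<^sub>0, 0)\<close>, \<open>u\<^sub>0 = 2\<gamma>/a\<close>, capped by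
  \<open>(h(u/(1+\<gamma>)) - A\<^sub>0)/(2L)\<close>; on \<open>(-\<infinity>,0]\<close> it is pushed down by a piecewise linear staircase \<open>Y\<close>
  chosen so that \<open>H\<^sub>\<alpha>(-\<phi>(-s)) \<ge> A\<^sub>0 + 2Ls/(1+\<gamma>)\<close>. With \<open>\<Phi>\<close> and \<open>V\<close> the primitives of \<open>\<phi>\<close> and
  \<open>\<phi>\<^sup>+\<close> vanishing at \<open>u\<^sub>0\<close>, set
  \<open>G(x,y) = \<Phi>(t - s) - \<Phi>(t) + V(t)\<close> for \<open>x = s, y = t\<close> on the same branch and
  \<open>G(x,y) = \<Phi>(-s) - \<gamma> + V(t) + st/(1+\<gamma>)\<close> across branches.
  The Hamiltonian inequality (iv) follows from monotonicity of \<open>\<phi>\<close> and of the \<open>H\<^sub>\<alpha>\<close> on \<open>[0,\<infinity>)\<close>,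
  superlinearity (v) from the quadratic growth of \<open>\<Phi>\<close> at \<open>-\<infinity>\<close> and the superlinear growth of \<open>V\<close>,
  and the \<open>C\<^sup>1\<^sup>,\<^sup>1\<close> bound from the fact that \<open>\<phi>\<close> is Lipschitz on \<open>[-K,K]\<close> with constant \<open>O(1/\<gamma>)\<close>.
\<close>

definition antideriv :: "(real \<Rightarrow> real) \<Rightarrow> real \<Rightarrow> real \<Rightarrow> real" where
  "antideriv f c u = (if c \<le> u then integral {c..u} f else - integral {u..c} f)"

lemma antideriv_base [simp]: "antideriv f c c = 0"
  by (simp add: antideriv_def)

lemma antideriv_has_real_derivative:
  assumes f: "continuous_on UNIV f"
  shows "(antideriv f c has_real_derivative f x) (at x)"
proof -
  define a where "a = min c x - 1"
  define b where "b = max c x + 1"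
  have fi: "f integrable_on {a..b}"
    by (rule integrable_continuous_real) (use f continuous_on_subset in blast)
  note combine = Henstock_Kurzweil_Integration.integral_combine[OF _ _ integrable_on_subinterval[OF fi]]
  have eq: "antideriv f c u = integral {a..u} f - integral {a..c} f" if "u \<in> {a<..<b}" for u
  proof (cases "c \<le> u")
    case True
    have "integral {a..c} f + integral {c..u} f = integral {a..u} f"
      by (rule combine) (use that True a_def b_def in auto)
    then show ?thesis using True by (simp add: antideriv_def)
  next
    case False
    have "integral {a..u} f + integral {u..c} f = integral {a..c} f"
      by (rule combine) (use that False a_def b_def in auto)
    then show ?thesis using False by (simp add: antideriv_def)
  qed
  have "((\<lambda>u. integral {a..u} f) has_real_derivative f x) (at x within {a..b})"
    by (rule integral_has_real_derivative) (use f continuous_on_subset a_def b_def in auto)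
  moreover have "at x within {a..b} = at x"
    by (rule at_within_Icc_at) (auto simp: a_def b_def)
  ultimately have "((\<lambda>u. integral {a..u} f - integral {a..c} f) has_real_derivative f x) (at x)"
    using DERIV_diff[OF _ DERIV_const] by fastforce
  then show ?thesis
    by (rule has_field_derivative_transform_within_open[where S="{a<..<b}"])
       (use eq in \<open>auto simp: a_def b_def\<close>)
qed

lemma DERIV_same_imp_diff_eq:
  fixes f g :: "real \<Rightarrow> real"
  assumes "a \<le> b"
    and "\<And>x. a \<le> x \<Longrightarrow> x \<le> b \<Longrightarrow> DERIV f x :> d x"
    and "\<And>x. a \<le> x \<Longrightarrow> x \<le> b \<Longrightarrow> DERIV g x :> d x"
  shows "f b - g b = f a - g a"
proof -
  have D: "DERIV (\<lambda>x. f x - g x) x :> 0" if "a \<le> x" "x \<le> b" for x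
    using DERIV_diff[OF assms(2)[OF that] assms(3)[OF that]] by simp
  have "(\<lambda>x. f x - g x) a \<le> (\<lambda>x. f x - g x) b"
    by (rule DERIV_nonneg_imp_nondecreasing[OF assms(1)]) (use D in auto)
  moreover have "(\<lambda>x. f x - g x) a \<ge> (\<lambda>x. f x - g x) b"
    by (rule DERIV_nonpos_imp_nonincreasing[OF assms(1)]) (use D in auto)
  ultimately show ?thesis by simp
qed

lemma DERIV_compose_has_derivative:
  fixes f :: "real \<Rightarrow> real"
  assumes "\<And>x. DERIV f x :> f' x" and "(g has_derivative g') (at z within X)"
  shows "((\<lambda>w. f (g w)) has_derivative (\<lambda>h. f' (g z) * g' h)) (at z within X)"
  using has_derivative_compose[OF assms(2) assms(1)[of "g z", unfolded has_field_derivative_def]]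
  by simp

lemma has_derivative_partials:
  fixes F :: "real \<times> real \<Rightarrow> real"
  assumes "(F has_derivative (\<lambda>h. fst h * A + snd h * B)) (at (s, t))"
  shows "DERIV (\<lambda>\<sigma>. F (\<sigma>, t)) s :> A" and "DERIV (\<lambda>\<tau>. F (s, \<tau>)) t :> B"
proof -
  have "((\<lambda>\<sigma>. (\<sigma>, t)) has_derivative (\<lambda>h. (h, 0))) (at s)"
    by (auto intro!: derivative_eq_intros)
  from has_derivative_compose[OF this assms]
  show "DERIV (\<lambda>\<sigma>. F (\<sigma>, t)) s :> A"
    by (simp add: has_field_derivative_def mult_commute_abs)
  have "((\<lambda>\<tau>. (s, \<tau>)) has_derivative (\<lambda>h. (0, h))) (at t)"
    by (auto intro!: derivative_eq_intros)
  from has_derivative_compose[OF this assms]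
  show "DERIV (\<lambda>\<tau>. F (s, \<tau>)) t :> B"
    by (simp add: has_field_derivative_def mult_commute_abs)
qed

lemma quasiconvex_mono_right_of_minimum:
  fixes f :: "real \<Rightarrow> real"
  assumes "\<And>c. convex {p. f p \<le> c}" and "\<And>p. f 0 \<le> f p" and "0 \<le> p" and "p \<le> q"
  shows "f p \<le> f q"
proof (cases "q = 0")
  case True
  then show ?thesis using assms by simp
next
  case False
  then have q: "q > 0" using assms by simp
  have "(1 - p / q) *\<^sub>R 0 + (p / q) *\<^sub>R q \<in> {x. f x \<le> f q}"
    by (rule convexD[OF assms(1)]) (use assms q in \<open>auto simp: field_simps\<close>)
  then show ?thesis using q by simp
qed

lemma coercive_levels:
  fixes h :: "real \<Rightarrow> real"
  assumes "\<And>B. \<exists>R. \<forall>p\<ge>R. B \<le> h p"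
  obtains a c where "a > 0" "A + 1 \<le> h a" "\<And>n. c n \<ge> 0" "\<And>n. A + real n + 2 \<le> h (a + c n)"
proof -
  obtain R1 where R1: "\<forall>p\<ge>R1. A + 1 \<le> h p" using assms by blast
  have "\<forall>n. \<exists>p. p \<ge> 0 \<and> A + real n + 2 \<le> h (max R1 1 + p)"
  proof
    fix n
    obtain R where "\<forall>p\<ge>R. A + real n + 2 \<le> h p" using assms by blast
    then show "\<exists>p. p \<ge> 0 \<and> A + real n + 2 \<le> h (max R1 1 + p)"
      by (intro exI[of _ "max 0 (R - max R1 1)"]) auto
  qed
  then obtain c where "\<And>n. c n \<ge> 0" "\<And>n. A + real n + 2 \<le> h (max R1 1 + c n)"
    by metis
  with R1 show thesis by (intro that[of "max R1 1" c]) auto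
qed

definition ramp :: "real \<Rightarrow> real" where
  "ramp x = min (max x 0) 1"

definition staircase :: "(nat \<Rightarrow> real) \<Rightarrow> real \<Rightarrow> real" where
  "staircase c \<sigma> = (\<Sum>n<nat \<lceil>\<sigma>\<rceil>. c n * ramp (\<sigma> - real n))"

definition staircase_lip_const :: "(nat \<Rightarrow> real) \<Rightarrow> real \<Rightarrow> real" where
  "staircase_lip_const c R = (\<Sum>n<nat \<lceil>R\<rceil>. c n)"

lemma ramp_continuous: "continuous_on UNIV ramp"
  unfolding ramp_def by (intro continuous_intros)

lemma staircase_eq_sum:
  assumes "\<sigma> \<le> real K"
  shows "staircase c \<sigma> = (\<Sum>n<K. c n * ramp (\<sigma> - real n))"
proof -
  have "{..<nat \<lceil>\<sigma>\<rceil>} \<subseteq> {..<K}"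
    using assms by (auto simp: nat_le_iff ceiling_le_iff)
  moreover have "c n * ramp (\<sigma> - real n) = 0" if "nat \<lceil>\<sigma>\<rceil> \<le> n" for n
    using that by (simp add: ramp_def)
  ultimately show ?thesis
    unfolding staircase_def by (intro sum.mono_neutral_left) auto
qed

lemma staircase_0 [simp]: "staircase c 0 = 0"
  by (simp add: staircase_def)

lemma staircase_continuous: "continuous_on UNIV (staircase c)"
proof -
  have "isCont (staircase c) x" for x
  proof -
    define K where "K = nat \<lceil>x\<rceil> + 1"
    have "x < real K" unfolding K_def by linarith
    have "continuous_on {..<real K} (\<lambda>\<sigma>. \<Sum>n<K. c n * ramp (\<sigma> - real n))"
      by (intro continuous_intros continuous_on_compose2[OF ramp_continuous]) auto
    then have "continuous_on {..<real K} (staircase c)"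
      by (rule continuous_on_cong[THEN iffD1, rotated 2]) (auto intro!: staircase_eq_sum[symmetric])
    with \<open>x < real K\<close> show ?thesis by (simp add: continuous_on_eq_continuous_at)
  qed
  then show ?thesis by (simp add: continuous_at_imp_continuous_on)
qed

context
  fixes c :: "nat \<Rightarrow> real"
  assumes c_nonneg: "\<And>n. c n \<ge> 0"
begin

lemma staircase_nonneg: "staircase c \<sigma> \<ge> 0"
  unfolding staircase_def ramp_def by (intro sum_nonneg mult_nonneg_nonneg c_nonneg) auto

lemma staircase_mono:
  assumes "x \<le> y"
  shows "staircase c x \<le> staircase c y"
proof -
  have K: "x \<le> real (nat \<lceil>y\<rceil>)" "y \<le> real (nat \<lceil>y\<rceil>)" using assms by linarith+
  have "(\<Sum>n<nat \<lceil>y\<rceil>. c n * ramp (x - real n)) \<le> (\<Sum>n<nat \<lceil>y\<rceil>. c n * ramp (y - real n))"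
    using assms by (intro sum_mono mult_left_mono c_nonneg) (auto simp: ramp_def)
  then show ?thesis using staircase_eq_sum[OF K(1)] staircase_eq_sum[OF K(2)] by simp
qed

lemma staircase_ge_step:
  assumes "real n + 1 \<le> \<sigma>"
  shows "c n \<le> staircase c \<sigma>"
proof -
  have K: "\<sigma> \<le> real (nat \<lceil>\<sigma>\<rceil>)" by linarith
  have "int n < \<lceil>\<sigma>\<rceil>" using assms le_of_int_ceiling[of \<sigma>] by linarith
  then have "n \<in> {..<nat \<lceil>\<sigma>\<rceil>}" by auto
  then have "c n * ramp (\<sigma> - real n) \<le> (\<Sum>n<nat \<lceil>\<sigma>\<rceil>. c n * ramp (\<sigma> - real n))"
    by (rule member_le_sum) (auto intro: mult_nonneg_nonneg c_nonneg simp: ramp_def)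
  moreover have "ramp (\<sigma> - real n) = 1" using assms by (simp add: ramp_def)
  ultimately show ?thesis using staircase_eq_sum[OF K] by simp
qed

lemma staircase_slope_nonneg: "staircase_lip_const c R \<ge> 0"
  unfolding staircase_lip_const_def by (intro sum_nonneg c_nonneg)

lemma staircase_lipschitz:
  assumes "x \<le> R" and "y \<le> R"
  shows "\<bar>staircase c x - staircase c y\<bar> \<le> staircase_lip_const c R * \<bar>x - y\<bar>"
proof -
  define K where "K = nat \<lceil>R\<rceil>"
  have K: "x \<le> real K" "y \<le> real K" using assms unfolding K_def by linarith+
  have "\<bar>staircase c x - staircase c y\<bar> = \<bar>\<Sum>n<K. c n * (ramp (x - real n) - ramp (y - real n))\<bar>"
    using staircase_eq_sum[OF K(1)] staircase_eq_sum[OF K(2)]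
    by (simp add: sum_subtractf[symmetric] algebra_simps)
  also have "\<dots> \<le> (\<Sum>n<K. \<bar>c n * (ramp (x - real n) - ramp (y - real n))\<bar>)"
    by (rule sum_abs)
  also have "\<dots> \<le> (\<Sum>n<K. c n * \<bar>x - y\<bar>)"
  proof (rule sum_mono)
    fix n
    have "\<bar>ramp (x - real n) - ramp (y - real n)\<bar> \<le> \<bar>x - y\<bar>" by (simp add: ramp_def)
    then show "\<bar>c n * (ramp (x - real n) - ramp (y - real n))\<bar> \<le> c n * \<bar>x - y\<bar>"
      using c_nonneg[of n] by (simp add: abs_mult mult_left_mono)
  qed
  also have "\<dots> = staircase_lip_const c R * \<bar>x - y\<bar>"
    by (simp add: staircase_lip_const_def K_def sum_distrib_right)
  finally show ?thesis .
qed

end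

lemma mem_J_jpt:
  assumes "N \<ge> 1" and "x \<in> J N"
  shows "x = jpt (fst x) (snd x)" and "fst x < N" and "snd x \<ge> 0"
  using assms unfolding J_def jpt_def by auto

lemma dJ_jpt:
  assumes "s \<ge> 0" and "t \<ge> 0"
  shows "dJ (jpt \<alpha> s) (jpt \<beta> t) = (if \<alpha> = \<beta> then \<bar>s - t\<bar> else s + t)"
  using assms unfolding dJ_def jpt_def by auto

lemma bderiv_eqI:
  assumes "t \<ge> 0" and "((\<lambda>s. u (jpt \<alpha> s)) has_real_derivative D) (at t within {0..})"
  shows "bderiv u \<alpha> t = D"
  unfolding bderiv_def
proof (rule the_equality)
  show "((\<lambda>s. u (jpt \<alpha> s)) has_real_derivative D) (at t within {0..})" by fact
  fix E assume E: "((\<lambda>s. u (jpt \<alpha> s)) has_real_derivative E) (at t within {0..})"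
  have "t islimpt {t..t+1}" by simp
  then have "t islimpt {0..}" by (rule islimpt_subset) (use assms(1) in auto)
  then have "at t within {0..} \<noteq> (bot :: real filter)" by (simp add: trivial_limit_within)
  then show "E = D"
    using vector_derivative_unique_within E assms(2)
    by (metis has_real_derivative_iff_has_vector_derivative)
qed

lemma FA_ge_term: "\<beta> < N \<Longrightarrow> H \<beta> (min (p \<beta>) 0) \<le> FA N H A p"
  unfolding FA_def by (rule max.coboundedI2) (rule Max_ge, auto)

lemma FA_le:
  assumes "N \<ge> 1" and "A \<le> B" and "\<And>\<alpha>. \<alpha> < N \<Longrightarrow> H \<alpha> (min (p \<alpha>) 0) \<le> B"
  shows "FA N H A p \<le> B"
proof -
  have "{..<N} \<noteq> {}" using assms(1) by (simp add: lessThan_empty_iff)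
  then show ?thesis using assms(2,3) by (simp add: FA_def Max_le_iff)
qed

lemma gnorm_le:
  assumes "N \<ge> 1" and "\<And>\<beta>. \<beta> < N \<Longrightarrow> \<bar>p \<beta>\<bar> \<le> C"
  shows "gnorm N p \<le> C"
proof -
  have "{..<N} \<noteq> {}" using assms(1) by (simp add: lessThan_empty_iff)
  then show ?thesis using assms(2) by (simp add: gnorm_def Max_le_iff)
qed

lemma hamiltonians_uniform_lipschitz:
  assumes "hamiltonians N H"
  obtains L where "L \<ge> 1" and "\<And>\<alpha> p q. \<alpha> < N \<Longrightarrow> \<bar>H \<alpha> p - H \<alpha> q\<bar> \<le> L * \<bar>p - q\<bar>"
proof -
  have "\<forall>\<alpha>\<in>{..<N}. \<exists>L. lipschitz_on L UNIV (H \<alpha>)"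
    using assms by (auto simp: hamiltonians_def)
  then obtain Lf where Lf: "\<And>\<alpha>. \<alpha> < N \<Longrightarrow> lipschitz_on (Lf \<alpha>) UNIV (H \<alpha>)"
    by (metis bchoice lessThan_iff)
  define L where "L = 1 + (\<Sum>\<alpha><N. \<bar>Lf \<alpha>\<bar>)"
  have "\<bar>H \<alpha> p - H \<alpha> q\<bar> \<le> L * \<bar>p - q\<bar>" if "\<alpha> < N" for \<alpha> p q
  proof -
    have "\<bar>Lf \<alpha>\<bar> \<le> (\<Sum>\<alpha><N. \<bar>Lf \<alpha>\<bar>)"
      using that by (intro member_le_sum) auto
    then have "\<bar>Lf \<alpha>\<bar> \<le> L" by (simp add: L_def)
    moreover have "\<bar>H \<alpha> p - H \<alpha> q\<bar> \<le> Lf \<alpha> * \<bar>p - q\<bar>"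
      using lipschitz_onD[OF Lf[OF that], of p q] by (simp add: dist_real_def)
    ultimately show ?thesis
      by (smt (verit) abs_ge_self abs_ge_zero mult_right_mono)
  qed
  moreover have "L \<ge> 1" by (simp add: L_def sum_nonneg)
  ultimately show thesis using that by blast
qed

lemma hamiltonians_uniformly_coercive:
  assumes "hamiltonians N H"
  obtains R where "\<And>\<alpha> p. \<alpha> < N \<Longrightarrow> R \<le> \<bar>p\<bar> \<Longrightarrow> B \<le> H \<alpha> p"
proof -
  have "\<forall>\<alpha>\<in>{..<N}. \<exists>R. \<forall>p. R \<le> norm p \<longrightarrow> B \<le> H \<alpha> p"
  proof
    fix \<alpha> assume "\<alpha> \<in> {..<N}"
    then have "filterlim (H \<alpha>) at_top at_infinity" using assms by (auto simp: hamiltonians_def)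
    then show "\<exists>R. \<forall>p. R \<le> norm p \<longrightarrow> B \<le> H \<alpha> p"
      by (simp add: filterlim_at_top eventually_at_infinity)
  qed
  then obtain Rf where Rf: "\<And>\<alpha> p. \<alpha> < N \<Longrightarrow> Rf \<alpha> \<le> \<bar>p\<bar> \<Longrightarrow> B \<le> H \<alpha> p"
    by (metis bchoice lessThan_iff real_norm_def)
  have "B \<le> H \<alpha> p" if "\<alpha> < N" "(\<Sum>\<alpha><N. \<bar>Rf \<alpha>\<bar>) \<le> \<bar>p\<bar>" for \<alpha> p
  proof -
    have "\<bar>Rf \<alpha>\<bar> \<le> (\<Sum>\<alpha><N. \<bar>Rf \<alpha>\<bar>)" using that(1) by (intro member_le_sum) auto
    then show ?thesis using Rf[OF that(1)] that(2) by force
  qed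
  then show thesis by (rule that)
qed

lemma hamiltonians_mono:
  assumes "hamiltonians N H" and "\<alpha> < N" and "\<And>p. H \<alpha> 0 \<le> H \<alpha> p" and "0 \<le> p" and "p \<le> q"
  shows "H \<alpha> p \<le> H \<alpha> q"
proof (rule quasiconvex_mono_right_of_minimum[where f = "H \<alpha>"])
  show "convex {p. H \<alpha> p \<le> c}" for c
    using assms(1,2) by (simp add: hamiltonians_def)
qed (use assms(3-5) in auto)

lemma hamiltonians_min_le_A0:
  assumes "\<alpha> < N" and "\<And>p. H \<alpha> 0 \<le> H \<alpha> p"
  shows "H \<alpha> 0 \<le> A0 N H"
proof -
  have "Inf (range (H \<alpha>)) = H \<alpha> 0"
    by (rule cInf_eq_minimum) (use assms in auto)
  moreover have "Inf (range (H \<alpha>)) \<le> A0 N H"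
    unfolding A0_def by (rule Max_ge) (use assms in auto)
  ultimately show ?thesis by simp
qed

definition lower_envelope :: "nat \<Rightarrow> (nat \<Rightarrow> real \<Rightarrow> real) \<Rightarrow> real \<Rightarrow> real" where
  "lower_envelope N H p = Min ((\<lambda>\<alpha>. H \<alpha> p) ` {..<N})"

context
  fixes N :: nat and H :: "nat \<Rightarrow> real \<Rightarrow> real"
  assumes N_pos: "N \<ge> 1"
begin

lemma lower_envelope_le: "\<alpha> < N \<Longrightarrow> lower_envelope N H p \<le> H \<alpha> p"
  unfolding lower_envelope_def by (rule Min_le) auto

lemma lower_envelope_attained: obtains \<beta> where "\<beta> < N" "lower_envelope N H p = H \<beta> p"
proof -
  have "lower_envelope N H p \<in> (\<lambda>\<alpha>. H \<alpha> p) ` {..<N}"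
    unfolding lower_envelope_def by (rule Min_in) (use N_pos in \<open>auto simp: lessThan_empty_iff\<close>)
  then show thesis using that by auto
qed

lemma lower_envelope_mono:
  assumes "\<And>\<alpha>. \<alpha> < N \<Longrightarrow> H \<alpha> p \<le> H \<alpha> q"
  shows "lower_envelope N H p \<le> lower_envelope N H q"
  by (metis assms lower_envelope_attained lower_envelope_le order_trans)

lemma lower_envelope_lipschitz:
  assumes "\<And>\<alpha>. \<alpha> < N \<Longrightarrow> \<bar>H \<alpha> p - H \<alpha> q\<bar> \<le> L"
  shows "\<bar>lower_envelope N H p - lower_envelope N H q\<bar> \<le> L"
proof -
  obtain \<beta> where \<beta>: "\<beta> < N" "lower_envelope N H q = H \<beta> q" by (rule lower_envelope_attained)
  obtain \<beta>' where \<beta>': "\<beta>' < N" "lower_envelope N H p = H \<beta>' p" by (rule lower_envelope_attained)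
  show ?thesis
    using lower_envelope_le[OF \<beta>(1), of p] lower_envelope_le[OF \<beta>'(1), of q]
      assms[OF \<beta>(1)] assms[OF \<beta>'(1)] \<beta> \<beta>' by linarith
qed

lemma lower_envelope_coercive:
  assumes "hamiltonians N H"
  shows "\<exists>R. \<forall>p\<ge>R. B \<le> lower_envelope N H p"
proof -
  obtain R where R: "\<And>\<alpha> p. \<alpha> < N \<Longrightarrow> R \<le> \<bar>p\<bar> \<Longrightarrow> B \<le> H \<alpha> p"
    using hamiltonians_uniformly_coercive[OF assms] by blast
  have "B \<le> lower_envelope N H p" if "R \<le> p" for p
  proof -
    obtain \<beta> where "\<beta> < N" "lower_envelope N H p = H \<beta> p" by (rule lower_envelope_attained)
    with R[of \<beta> p] that show ?thesis by simp
  qed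
  then show ?thesis by blast
qed

end

subsection \<open>The profile \<open>\<phi>\<close>\<close>

locale vertex_test_data =
  fixes N :: nat and H :: "nat \<Rightarrow> real \<Rightarrow> real" and L :: real
    and h :: "real \<Rightarrow> real" and a :: real and c :: "nat \<Rightarrow> real"
  assumes N_pos: "N \<ge> 1"
    and H_mono: "\<And>\<alpha> p q. \<alpha> < N \<Longrightarrow> 0 \<le> p \<Longrightarrow> p \<le> q \<Longrightarrow> H \<alpha> p \<le> H \<alpha> q"
    and H_lipschitz: "\<And>\<alpha> p q. \<alpha> < N \<Longrightarrow> \<bar>H \<alpha> p - H \<alpha> q\<bar> \<le> L * \<bar>p - q\<bar>"
    and L_ge_1: "L \<ge> 1"
    and H_0_le_A0: "\<And>\<alpha>. \<alpha> < N \<Longrightarrow> H \<alpha> 0 \<le> A0 N H"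
    and h_le_H: "\<And>\<alpha> p. \<alpha> < N \<Longrightarrow> 0 \<le> p \<Longrightarrow> h p \<le> H \<alpha> p"
    and h_mono: "\<And>p q. 0 \<le> p \<Longrightarrow> p \<le> q \<Longrightarrow> h p \<le> h q"
    and h_lipschitz: "\<And>p q. \<bar>h p - h q\<bar> \<le> L * \<bar>p - q\<bar>"
    and h_coercive: "\<And>B. \<exists>R. \<forall>p\<ge>R. B \<le> h p"
    and a_pos: "a > 0"
    and h_a: "A0 N H + 1 \<le> h a"
    and c_nonneg: "\<And>n. c n \<ge> 0"
    and h_a_c: "\<And>n. A0 N H + real n + 2 \<le> h (a + c n)"
begin

abbreviation "A\<^sub>0 \<equiv> A0 N H"

lemma h_continuous: "continuous_on UNIV h"
proof (rule lipschitz_on_continuous_on)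
  show "lipschitz_on L UNIV h"
    by (rule lipschitz_onI) (use h_lipschitz L_ge_1 in \<open>auto simp: dist_real_def\<close>)
qed

lemma H_le_A0_plus: "\<alpha> < N \<Longrightarrow> H \<alpha> q \<le> A\<^sub>0 + L * \<bar>q\<bar>"
  using H_lipschitz[of \<alpha> q 0] H_0_le_A0[of \<alpha>] by auto

lemma h_a_plus_staircase_ge:
  assumes "\<sigma> \<ge> 0"
  shows "A\<^sub>0 + \<sigma> \<le> h (a + staircase c \<sigma>)"
proof (cases "\<sigma> \<le> 1")
  case True
  have "h a \<le> h (a + staircase c \<sigma>)"
    using a_pos staircase_nonneg[of c, OF c_nonneg] by (intro h_mono) auto
  then show ?thesis using h_a True by linarith
next
  case False
  define n where "n = nat \<lfloor>\<sigma>\<rfloor> - 1"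
  have n: "real n + 1 \<le> \<sigma>" "\<sigma> < real n + 2" using False unfolding n_def by linarith+
  have "h (a + c n) \<le> h (a + staircase c \<sigma>)"
    using a_pos c_nonneg[of n] staircase_ge_step[of c, OF c_nonneg n(1)] by (intro h_mono) auto
  then show ?thesis using h_a_c[of n] n by linarith
qed

definition "phi_lip_const K = a\<^sup>2 / 2 + 1 / 2 + 2 * L * staircase_lip_const c (2 * L * K)"

lemma phi_lip_const_nonneg: "phi_lip_const K \<ge> 0"
  unfolding phi_lip_const_def using staircase_slope_nonneg[of c, OF c_nonneg] L_ge_1 by simp

definition "hessian_bound K = 4 * phi_lip_const K + a\<^sup>2 + 2"

end

locale vertex_test_construction = vertex_test_data +
  fixes \<gamma> :: real
  assumes \<gamma>_pos: "\<gamma> > 0"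
begin

definition "M = a\<^sup>2 / (2 * \<gamma>)"
definition "u\<^sub>0 = 2 * \<gamma> / a"
definition "S u = max 0 ((h (max u 0 / (1 + \<gamma>)) - A\<^sub>0) / (2 * L))"
definition "phi u = min (M * (u - u\<^sub>0)) (S u) - staircase c (2 * L * max (- u) 0 / (1 + \<gamma>))"

lemma M_pos: "M > 0"
  using a_pos \<gamma>_pos by (simp add: M_def)

lemma u0_pos: "u\<^sub>0 > 0"
  using a_pos \<gamma>_pos by (simp add: u\<^sub>0_def)

lemma M_u0: "M * u\<^sub>0 = a"
  using a_pos \<gamma>_pos by (simp add: M_def u\<^sub>0_def power2_eq_square)

lemma M_u0_square: "M * u\<^sub>0\<^sup>2 / 2 = \<gamma>"
  using a_pos \<gamma>_pos by (simp add: M_def u\<^sub>0_def power2_eq_square)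

lemma S_nonneg: "S u \<ge> 0"
  by (simp add: S_def)

lemma S_mono:
  assumes "u \<le> v"
  shows "S u \<le> S v"
proof -
  have "h (max u 0 / (1 + \<gamma>)) \<le> h (max v 0 / (1 + \<gamma>))"
    using assms \<gamma>_pos by (intro h_mono) (auto simp: divide_right_mono)
  then show ?thesis
    using L_ge_1 unfolding S_def by (smt (verit) divide_right_mono)
qed

lemma S_lipschitz: "\<bar>S u - S v\<bar> \<le> \<bar>u - v\<bar> / (2 * \<gamma>)"
proof -
  let ?p = "\<lambda>u. max u 0 / (1 + \<gamma>)"
  have "\<bar>?p u - ?p v\<bar> = \<bar>max u 0 - max v 0\<bar> / (1 + \<gamma>)"
    using \<gamma>_pos by (simp add: diff_divide_distrib[symmetric])
  also have "\<dots> \<le> \<bar>u - v\<bar> / (1 + \<gamma>)"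
    using \<gamma>_pos by (intro divide_right_mono) auto
  also have "\<dots> \<le> \<bar>u - v\<bar> / \<gamma>"
    using \<gamma>_pos by (intro divide_left_mono) auto
  finally have "L * \<bar>?p u - ?p v\<bar> \<le> L * (\<bar>u - v\<bar> / \<gamma>)"
    using L_ge_1 by (intro mult_left_mono) auto
  then have "\<bar>h (?p u) - h (?p v)\<bar> \<le> L * (\<bar>u - v\<bar> / \<gamma>)"
    using h_lipschitz[of "?p u" "?p v"] by linarith
  then have "\<bar>h (?p u) - h (?p v)\<bar> / (2 * L) \<le> L * (\<bar>u - v\<bar> / \<gamma>) / (2 * L)"
    using L_ge_1 by (intro divide_right_mono) auto
  also have "\<dots> = \<bar>u - v\<bar> / (2 * \<gamma>)"
    using L_ge_1 by simp
  moreover have "\<bar>S u - S v\<bar> \<le> \<bar>(h (?p u) - A\<^sub>0) / (2 * L) - (h (?p v) - A\<^sub>0) / (2 * L)\<bar>"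
    unfolding S_def by linarith
  ultimately show ?thesis
    using L_ge_1 by (simp add: diff_divide_distrib[symmetric])
qed

lemma S_continuous: "continuous_on UNIV S"
  unfolding S_def using \<gamma>_pos L_ge_1
  by (intro continuous_intros continuous_on_compose2[OF h_continuous]) auto

lemma phi_continuous: "continuous_on UNIV phi"
  unfolding phi_def using \<gamma>_pos
  by (intro continuous_intros S_continuous
        continuous_on_compose2[OF staircase_continuous]) auto

lemma phi_mono:
  assumes "u \<le> v"
  shows "phi u \<le> phi v"
proof -
  have "staircase c (2 * L * max (- v) 0 / (1 + \<gamma>)) \<le> staircase c (2 * L * max (- u) 0 / (1 + \<gamma>))"
    using assms \<gamma>_pos L_ge_1
    by (intro staircase_mono[of c, OF c_nonneg] divide_right_mono mult_left_mono) auto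
  moreover have "M * (u - u\<^sub>0) \<le> M * (v - u\<^sub>0)" using M_pos assms by simp
  ultimately show ?thesis
    using S_mono[OF assms] unfolding phi_def by linarith
qed

lemma phi_le_line: "phi u \<le> M * (u - u\<^sub>0)"
  using staircase_nonneg[of c, OF c_nonneg, where \<sigma> = "2 * L * max (- u) 0 / (1 + \<gamma>)"]
  unfolding phi_def by linarith

lemma phi_of_nonneg: "u \<ge> 0 \<Longrightarrow> phi u = min (M * (u - u\<^sub>0)) (S u)"
  by (simp add: phi_def)

lemma phi_nonneg: "u \<ge> u\<^sub>0 \<Longrightarrow> phi u \<ge> 0"
  using u0_pos M_pos S_nonneg[of u] by (simp add: phi_of_nonneg)

lemma phi_nonpos: "u \<le> u\<^sub>0 \<Longrightarrow> phi u \<le> 0"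
  using phi_le_line[of u] M_pos by (smt (verit) mult_nonneg_nonpos)

lemma phi_between:
  assumes "0 \<le> u" and "u \<le> u\<^sub>0"
  shows "phi u = M * (u - u\<^sub>0)"
proof -
  have "M * (u - u\<^sub>0) \<le> 0" using M_pos assms(2) by (simp add: mult_nonneg_nonpos)
  then show ?thesis using assms(1) S_nonneg[of u] by (simp add: phi_of_nonneg)
qed

lemma phi_0: "phi 0 = - a"
  using phi_between[of 0] u0_pos M_u0 by simp

lemma phi_ge: "t \<ge> 0 \<Longrightarrow> phi t \<ge> - a"
  using phi_mono[of 0 t] phi_0 by simp

lemma minus_phi_minus:
  assumes "s \<ge> 0"
  shows "- phi (- s) = a + M * s + staircase c (2 * L * s / (1 + \<gamma>))"
proof -
  have "M * (- s - u\<^sub>0) \<le> 0" using M_pos u0_pos assms by (simp add: mult_nonneg_nonpos)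
  then have "min (M * (- s - u\<^sub>0)) (S (- s)) = M * (- s - u\<^sub>0)" using S_nonneg[of "-s"] by simp
  then show ?thesis using assms M_u0 by (simp add: phi_def algebra_simps)
qed

lemma max_phi_le_S: "t \<ge> 0 \<Longrightarrow> max (phi t) 0 \<le> S t"
  using S_nonneg[of t] by (simp add: phi_of_nonneg)

lemma L_times_S: "t \<ge> 0 \<Longrightarrow> L * S t = max 0 ((h (t / (1 + \<gamma>)) - A\<^sub>0) / 2)"
  using L_ge_1 unfolding S_def by (simp add: max_mult_distrib_left)

lemma phi_unbounded: "\<exists>R\<ge>u\<^sub>0. B \<le> phi R"
proof -
  obtain R0 where R0: "\<forall>p\<ge>R0. A\<^sub>0 + 2 * L * B \<le> h p" using h_coercive by blast
  define R where "R = max u\<^sub>0 (max (B / M + u\<^sub>0) (R0 * (1 + \<gamma>)))"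
  have R: "R \<ge> u\<^sub>0" "R \<ge> B / M + u\<^sub>0" "R \<ge> R0 * (1 + \<gamma>)" by (auto simp: R_def)
  have "B \<le> M * (R - u\<^sub>0)" using R(2) M_pos by (simp add: field_simps)
  moreover have "B \<le> S R"
  proof -
    have "R / (1 + \<gamma>) \<ge> R0" using R(3) \<gamma>_pos by (simp add: field_simps)
    then have "A\<^sub>0 + 2 * L * B \<le> h (R / (1 + \<gamma>))" using R0 by blast
    then have "B \<le> (h (max R 0 / (1 + \<gamma>)) - A\<^sub>0) / (2 * L)"
      using L_ge_1 R(1) u0_pos by (simp add: field_simps)
    then show ?thesis unfolding S_def by linarith
  qed
  ultimately show ?thesis using R(1) u0_pos by (intro exI[of _ R]) (simp add: phi_of_nonneg)
qed

lemma phi_lipschitz: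
  assumes "\<bar>u\<bar> \<le> K" and "\<bar>v\<bar> \<le> K"
  shows "\<bar>phi u - phi v\<bar> \<le> phi_lip_const K / \<gamma> * \<bar>u - v\<bar>"
proof -
  define y where "y u = 2 * L * max (- u) 0 / (1 + \<gamma>)" for u
  have y_le: "y u \<le> 2 * L * K" if "\<bar>u\<bar> \<le> K" for u
  proof -
    have "2 * L * max (- u) 0 / (1 + \<gamma>) \<le> 2 * L * max (- u) 0"
      using L_ge_1 \<gamma>_pos by (simp add: field_simps)
    also have "\<dots> \<le> 2 * L * K" using that L_ge_1 by (intro mult_left_mono) auto
    finally show ?thesis by (simp add: y_def)
  qed
  have "\<bar>y u - y v\<bar> = 2 * L * \<bar>max (- u) 0 - max (- v) 0\<bar> / (1 + \<gamma>)"
    unfolding y_def using L_ge_1 \<gamma>_pos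
    by (simp add: diff_divide_distrib[symmetric] abs_mult right_diff_distrib[symmetric])
  also have "\<dots> \<le> 2 * L * \<bar>u - v\<bar> / (1 + \<gamma>)"
    using L_ge_1 \<gamma>_pos by (intro divide_right_mono mult_left_mono) auto
  also have "\<dots> \<le> 2 * L * \<bar>u - v\<bar> / \<gamma>"
    using L_ge_1 \<gamma>_pos by (intro divide_left_mono) auto
  finally have "staircase_lip_const c (2 * L * K) * \<bar>y u - y v\<bar>
      \<le> staircase_lip_const c (2 * L * K) * (2 * L * \<bar>u - v\<bar> / \<gamma>)"
    by (intro mult_left_mono staircase_slope_nonneg[of c, OF c_nonneg])
  then have Y: "\<bar>staircase c (y u) - staircase c (y v)\<bar>
      \<le> staircase_lip_const c (2 * L * K) * (2 * L * \<bar>u - v\<bar> / \<gamma>)"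
    using staircase_lipschitz[of c, OF c_nonneg y_le[OF assms(1)] y_le[OF assms(2)]] by linarith
  have "\<bar>M * (u - u\<^sub>0) - M * (v - u\<^sub>0)\<bar> = M * \<bar>u - v\<bar>"
    using M_pos by (simp add: abs_mult right_diff_distrib[symmetric])
  then have line: "\<bar>M * (u - u\<^sub>0) - M * (v - u\<^sub>0)\<bar> = a\<^sup>2 / 2 / \<gamma> * \<bar>u - v\<bar>"
    by (simp add: M_def)
  have "\<bar>phi u - phi v\<bar>
      \<le> \<bar>M * (u - u\<^sub>0) - M * (v - u\<^sub>0)\<bar> + \<bar>S u - S v\<bar> + \<bar>staircase c (y u) - staircase c (y v)\<bar>"
    unfolding phi_def y_def by linarith
  also have "\<dots> \<le> a\<^sup>2 / 2 / \<gamma> * \<bar>u - v\<bar> + \<bar>u - v\<bar> / (2 * \<gamma>)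
      + staircase_lip_const c (2 * L * K) * (2 * L * \<bar>u - v\<bar> / \<gamma>)"
    using line S_lipschitz[of u v] Y by linarith
  also have "\<dots> = phi_lip_const K / \<gamma> * \<bar>u - v\<bar>"
    unfolding phi_lip_const_def using \<gamma>_pos by (simp add: field_simps)
  finally show ?thesis .
qed

subsection \<open>The primitives \<open>\<Phi>\<close> and \<open>V\<close>\<close>

definition "Phi = antideriv phi u\<^sub>0"
definition "V = antideriv (\<lambda>u. max (phi u) 0) u\<^sub>0"

lemma DERIV_Phi: "DERIV Phi u :> phi u"
  unfolding Phi_def by (rule antideriv_has_real_derivative[OF phi_continuous])

lemma DERIV_V: "DERIV V u :> max (phi u) 0"
  unfolding V_def by (rule antideriv_has_real_derivative) (intro continuous_intros phi_continuous)

lemma Phi_u0: "Phi u\<^sub>0 = 0"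
  by (simp add: Phi_def)

lemma V_u0: "V u\<^sub>0 = 0"
  by (simp add: V_def)

lemma DERIV_line_square: "DERIV (\<lambda>x. M * (x - u\<^sub>0)\<^sup>2 / 2) x :> M * (x - u\<^sub>0)"
  by (auto intro!: derivative_eq_intros)

lemma Phi_between:
  assumes "0 \<le> u" and "u \<le> u\<^sub>0"
  shows "Phi u = M * (u - u\<^sub>0)\<^sup>2 / 2"
proof -
  have "Phi u\<^sub>0 - M * (u\<^sub>0 - u\<^sub>0)\<^sup>2 / 2 = Phi u - M * (u - u\<^sub>0)\<^sup>2 / 2"
  proof (rule DERIV_same_imp_diff_eq[OF assms(2), where d = "\<lambda>x. M * (x - u\<^sub>0)"])
    fix x assume "u \<le> x" "x \<le> u\<^sub>0"
    then show "DERIV Phi x :> M * (x - u\<^sub>0)"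
      using DERIV_Phi[of x] phi_between[of x] assms by simp
  qed (rule DERIV_line_square)
  then show ?thesis using Phi_u0 by simp
qed

lemma Phi_0: "Phi 0 = \<gamma>"
  using Phi_between[of 0] u0_pos M_u0_square by simp

lemma Phi_ge_quadratic:
  assumes "u \<le> u\<^sub>0"
  shows "M * (u - u\<^sub>0)\<^sup>2 / 2 \<le> Phi u"
proof -
  have "Phi u\<^sub>0 - M * (u\<^sub>0 - u\<^sub>0)\<^sup>2 / 2 \<le> Phi u - M * (u - u\<^sub>0)\<^sup>2 / 2"
  proof (rule DERIV_nonpos_imp_nonincreasing[OF assms])
    fix x
    show "\<exists>y. DERIV (\<lambda>x. Phi x - M * (x - u\<^sub>0)\<^sup>2 / 2) x :> y \<and> y \<le> 0"
      using DERIV_diff[OF DERIV_Phi DERIV_line_square, of x] phi_le_line[of x] by auto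
  qed
  then show ?thesis using Phi_u0 by simp
qed

lemma Phi_antimono:
  assumes "u \<le> v" and "v \<le> u\<^sub>0"
  shows "Phi v \<le> Phi u"
proof (rule DERIV_nonpos_imp_nonincreasing[OF assms(1)])
  fix x assume "u \<le> x" "x \<le> v"
  then show "\<exists>y. DERIV Phi x :> y \<and> y \<le> 0"
    using DERIV_Phi[of x] phi_nonpos[of x] assms by auto
qed

lemma Phi_mono:
  assumes "u\<^sub>0 \<le> u" and "u \<le> v"
  shows "Phi u \<le> Phi v"
proof (rule DERIV_nonneg_imp_nondecreasing[OF assms(2)])
  fix x assume "u \<le> x" "x \<le> v"
  then show "\<exists>y. DERIV Phi x :> y \<and> y \<ge> 0"
    using DERIV_Phi[of x] phi_nonneg[of x] assms by auto
qed

lemma Phi_nonneg: "Phi u \<ge> 0"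
  using Phi_antimono[of u u\<^sub>0] Phi_mono[of u\<^sub>0 u] Phi_u0 by (cases "u \<le> u\<^sub>0") auto

lemma Phi_neg_ge:
  assumes "s \<ge> 0"
  shows "M * s\<^sup>2 / 2 \<le> Phi (- s)" and "\<gamma> \<le> Phi (- s)"
proof -
  have "s\<^sup>2 \<le> (- s - u\<^sub>0)\<^sup>2"
    using assms u0_pos by (simp add: power2_eq_square algebra_simps)
  then have "M * s\<^sup>2 / 2 \<le> M * (- s - u\<^sub>0)\<^sup>2 / 2" using M_pos by simp
  then show "M * s\<^sup>2 / 2 \<le> Phi (- s)"
    using Phi_ge_quadratic[of "- s"] u0_pos assms by simp
  show "\<gamma> \<le> Phi (- s)"
    using Phi_antimono[of "- s" 0] assms u0_pos Phi_0 by simp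
qed

lemma V_eq_0:
  assumes "t \<le> u\<^sub>0"
  shows "V t = 0"
proof -
  have "V u\<^sub>0 - 0 = V t - 0"
  proof (rule DERIV_same_imp_diff_eq[OF assms, where d = "\<lambda>_. 0"])
    fix x assume "t \<le> x" "x \<le> u\<^sub>0"
    then show "DERIV V x :> 0" using DERIV_V[of x] phi_nonpos[of x] by (simp add: max_absorb2)
  qed auto
  then show ?thesis using V_u0 by simp
qed

lemma V_mono:
  assumes "t \<le> t'"
  shows "V t \<le> V t'"
  by (rule DERIV_nonneg_imp_nondecreasing[OF assms]) (use DERIV_V in fastforce)

lemma V_nonneg: "V t \<ge> 0"
  using V_mono[of u\<^sub>0 t] V_eq_0[of t] V_u0 by (cases "t \<le> u\<^sub>0") auto

lemma V_eq_Phi: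
  assumes "u\<^sub>0 \<le> t"
  shows "V t = Phi t"
proof -
  have "V t - Phi t = V u\<^sub>0 - Phi u\<^sub>0"
  proof (rule DERIV_same_imp_diff_eq[OF assms, where d = phi])
    fix x assume "u\<^sub>0 \<le> x" "x \<le> t"
    then show "DERIV V x :> phi x" using DERIV_V[of x] phi_nonneg[of x] by (simp add: max_absorb1)
  qed (rule DERIV_Phi)
  then show ?thesis using V_u0 Phi_u0 by simp
qed

lemma V_le_Phi: "V t \<le> Phi t"
  using V_eq_0[of t] V_eq_Phi[of t] Phi_nonneg[of t] by (cases "t \<le> u\<^sub>0") auto

lemma Phi_minus_V_le:
  assumes "t \<ge> 0"
  shows "Phi t - V t \<le> \<gamma>"
proof (cases "t \<le> u\<^sub>0")
  case True
  then show ?thesis using V_eq_0[of t] Phi_antimono[of 0 t] assms Phi_0 by auto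
next
  case False
  then show ?thesis using V_eq_Phi[of t] \<gamma>_pos by auto
qed

lemma V_ge_linear:
  assumes "u\<^sub>0 \<le> R" and "R \<le> r"
  shows "(r - R) * phi R \<le> V r"
proof -
  have "V R - (R - R) * phi R \<le> V r - (r - R) * phi R"
  proof (rule DERIV_nonneg_imp_nondecreasing[OF assms(2)])
    fix x assume "R \<le> x" "x \<le> r"
    have "DERIV (\<lambda>x. V x - (x - R) * phi R) x :> max (phi x) 0 - phi R"
      by (auto intro!: derivative_eq_intros DERIV_V)
    moreover have "phi R \<le> phi x" using phi_mono \<open>R \<le> x\<close> by simp
    ultimately show "\<exists>y. DERIV (\<lambda>x. V x - (x - R) * phi R) x :> y \<and> y \<ge> 0"
      by (intro exI[of _ "max (phi x) 0 - phi R"]) auto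
  qed
  then show ?thesis using V_nonneg[of R] by simp
qed

subsection \<open>The test function and its partial derivatives\<close>

definition "G_same s t = Phi (t - s) - Phi t + V t"
definition "G_cross s t = Phi (- s) - \<gamma> + V t + s * t / (1 + \<gamma>)"
definition "G_piece \<alpha> \<beta> s t = (if \<alpha> = \<beta> then G_same s t else G_cross s t)"
definition "G x y = G_piece (fst x) (fst y) (snd x) (snd y)"

definition "Gs \<alpha> \<beta> s t = (if \<alpha> = \<beta> then - phi (t - s) else - phi (- s) + t / (1 + \<gamma>))"
definition "Gt \<alpha> \<beta> s t =
  (if \<alpha> = \<beta> then phi (t - s) - min (phi t) 0 else max (phi t) 0 + s / (1 + \<gamma>))"

lemma G_same_has_derivative:
  "((\<lambda>w. G_same (fst w) (snd w)) has_derivative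
     (\<lambda>k. fst k * Gs \<alpha> \<alpha> (fst z) (snd z) + snd k * Gt \<alpha> \<alpha> (fst z) (snd z))) (at z within X)"
proof -
  have f: "(fst has_derivative fst) (at z within X)"
    and s: "(snd has_derivative snd) (at z within X)"
    by (auto intro: derivative_intros)
  have "((\<lambda>w. Phi (snd w - fst w) - Phi (snd w) + V (snd w)) has_derivative
      (\<lambda>k. phi (snd z - fst z) * (snd k - fst k) - phi (snd z) * snd k
        + max (phi (snd z)) 0 * snd k))
      (at z within X)"
    by (intro has_derivative_add has_derivative_diff
        DERIV_compose_has_derivative[OF DERIV_Phi has_derivative_diff[OF s f]]
        DERIV_compose_has_derivative[OF DERIV_Phi s] DERIV_compose_has_derivative[OF DERIV_V s])
  then show ?thesis
    unfolding G_same_def Gs_def Gt_def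
    by (rule has_derivative_eq_rhs) (auto simp: algebra_simps max_def min_def)
qed

lemma G_cross_has_derivative:
  assumes "\<alpha> \<noteq> \<beta>"
  shows "((\<lambda>w. G_cross (fst w) (snd w)) has_derivative
     (\<lambda>k. fst k * Gs \<alpha> \<beta> (fst z) (snd z) + snd k * Gt \<alpha> \<beta> (fst z) (snd z))) (at z within X)"
proof -
  have f: "(fst has_derivative fst) (at z within X)"
    and s: "(snd has_derivative snd) (at z within X)"
    by (auto intro: derivative_intros)
  have "((\<lambda>w. Phi (- fst w) - \<gamma> + V (snd w) + fst w * snd w * (1 / (1 + \<gamma>))) has_derivative
      (\<lambda>k. phi (- fst z) * (- fst k) - 0 + max (phi (snd z)) 0 * snd k
        + (fst z * snd k + fst k * snd z) * (1 / (1 + \<gamma>)))) (at z within X)"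
    by (intro has_derivative_add has_derivative_diff has_derivative_const
        DERIV_compose_has_derivative[OF DERIV_Phi has_derivative_minus[OF f]]
        DERIV_compose_has_derivative[OF DERIV_V s]
        has_derivative_mult_left has_derivative_mult[OF f s])
  then show ?thesis
    unfolding G_cross_def Gs_def Gt_def using assms
    by (rule_tac has_derivative_eq_rhs) (auto simp: algebra_simps add_divide_distrib)
qed

lemma G_piece_has_derivative:
  "((\<lambda>w. G_piece \<alpha> \<beta> (fst w) (snd w)) has_derivative
     (\<lambda>k. fst k * Gs \<alpha> \<beta> (fst z) (snd z) + snd k * Gt \<alpha> \<beta> (fst z) (snd z))) (at z within X)"
  unfolding G_piece_def
  by (cases "\<alpha> = \<beta>") (simp_all add: G_same_has_derivative G_cross_has_derivative)

lemma DERIV_G_piece_left: "DERIV (\<lambda>\<sigma>. G_piece \<alpha> \<beta> \<sigma> t) s :> Gs \<alpha> \<beta> s t"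
  using has_derivative_partials(1)[OF G_piece_has_derivative[of \<alpha> \<beta> "(s, t)" UNIV]] by simp

lemma DERIV_G_piece_right: "DERIV (\<lambda>\<tau>. G_piece \<alpha> \<beta> s \<tau>) t :> Gt \<alpha> \<beta> s t"
  using has_derivative_partials(2)[OF G_piece_has_derivative[of \<alpha> \<beta> "(s, t)" UNIV]] by simp

lemma G_jpt: "G (jpt \<alpha> s) (jpt \<beta> t) = G_piece \<alpha> \<beta> s t"
proof -
  have "G_same 0 t = G_cross 0 t" "G_same s 0 = G_cross s 0"
    using V_eq_0[of 0] u0_pos by (simp_all add: G_same_def G_cross_def Phi_0)
  then show ?thesis unfolding G_def jpt_def G_piece_def by auto
qed

lemma bderiv_G_left:
  assumes "s \<ge> 0"
  shows "bderiv (\<lambda>x. G x (jpt \<beta> t)) \<alpha> s = Gs \<alpha> \<beta> s t"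
  using assms has_field_derivative_at_within[OF DERIV_G_piece_left]
  by (intro bderiv_eqI) (simp_all add: G_jpt)

lemma bderiv_G_right:
  assumes "t \<ge> 0"
  shows "bderiv (G (jpt \<alpha> s)) \<beta> t = Gt \<alpha> \<beta> s t"
  using assms has_field_derivative_at_within[OF DERIV_G_piece_right]
  by (intro bderiv_eqI) (simp_all add: G_jpt)

lemma isCont_phi_compose [continuous_intros]: "isCont f x \<Longrightarrow> isCont (\<lambda>x. phi (f x)) x"
  by (rule isCont_o2) (use phi_continuous in \<open>simp_all add: continuous_on_eq_continuous_at\<close>)

lemma isCont_Gs: "isCont (\<lambda>s. Gs \<alpha> \<beta> s t) s"
  unfolding Gs_def by (cases "\<alpha> = \<beta>") (auto intro!: continuous_intros)

lemma isCont_Gt: "isCont (\<lambda>t. Gt \<alpha> \<beta> s t) t"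
  unfolding Gt_def by (cases "\<alpha> = \<beta>") (auto intro!: continuous_intros)

lemma G_piece_continuous: "continuous_on X (\<lambda>z. G_piece \<alpha> \<beta> (fst z) (snd z))"
  unfolding continuous_on_eq_continuous_within
  by (intro ballI has_derivative_continuous[OF G_piece_has_derivative])

lemma C1J_G_left:
  assumes "x \<in> J N"
  shows "C1J N (G x)"
  unfolding C1J_def
proof (intro allI impI conjI)
  fix \<beta> t assume "\<beta> < N"
  obtain \<alpha> s where x: "x = jpt \<alpha> s" using mem_J_jpt(1)[OF N_pos assms] by blast
  show "continuous_on {0..} (\<lambda>t. G x (jpt \<beta> t))"
    unfolding x G_jpt
    by (intro continuous_at_imp_continuous_on ballI DERIV_isCont[OF DERIV_G_piece_right])
  show "((\<lambda>\<tau>. G x (jpt \<beta> \<tau>)) has_real_derivative bderiv (G x) \<beta> t) (at t within {0..})"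
    if "t \<ge> 0"
    using has_field_derivative_at_within[OF DERIV_G_piece_right]
    unfolding x G_jpt bderiv_G_right[OF that] .
  have "continuous_on {0..} (\<lambda>t. Gt \<alpha> \<beta> s t)"
    by (intro continuous_at_imp_continuous_on ballI isCont_Gt)
  then show "continuous_on {0..} (bderiv (G x) \<beta>)"
    unfolding x
    by (rule continuous_on_cong[THEN iffD1, OF refl, rotated]) (simp add: bderiv_G_right)
qed

lemma C1J_G_right:
  assumes "y \<in> J N"
  shows "C1J N (\<lambda>x. G x y)"
  unfolding C1J_def
proof (intro allI impI conjI)
  fix \<alpha> s assume "\<alpha> < N"
  obtain \<beta> t where y: "y = jpt \<beta> t" using mem_J_jpt(1)[OF N_pos assms] by blast
  show "continuous_on {0..} (\<lambda>s. G (jpt \<alpha> s) y)"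
    unfolding y G_jpt
    by (intro continuous_at_imp_continuous_on ballI DERIV_isCont[OF DERIV_G_piece_left])
  show "((\<lambda>\<sigma>. G (jpt \<alpha> \<sigma>) y) has_real_derivative bderiv (\<lambda>x. G x y) \<alpha> s) (at s within {0..})"
    if "s \<ge> 0"
    using has_field_derivative_at_within[OF DERIV_G_piece_left]
    unfolding y G_jpt bderiv_G_left[OF that] .
  have "continuous_on {0..} (\<lambda>s. Gs \<alpha> \<beta> s t)"
    by (intro continuous_at_imp_continuous_on ballI isCont_Gs)
  then show "continuous_on {0..} (bderiv (\<lambda>x. G x y) \<alpha>)"
    unfolding y
    by (rule continuous_on_cong[THEN iffD1, OF refl, rotated]) (simp add: bderiv_G_left)
qed

lemma G_piece_nonneg:
  assumes "s \<ge> 0" and "t \<ge> 0"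
  shows "G_piece \<alpha> \<beta> s t \<ge> 0"
proof -
  have "G_same s t \<ge> 0"
  proof (cases "t \<le> u\<^sub>0")
    case True
    then show ?thesis using V_eq_0[of t] Phi_antimono[of "t - s" t] assms by (simp add: G_same_def)
  next
    case False
    then show ?thesis using V_eq_Phi[of t] Phi_nonneg[of "t - s"] by (simp add: G_same_def)
  qed
  moreover have "G_cross s t \<ge> 0"
    using Phi_neg_ge(2)[OF assms(1)] V_nonneg[of t] assms \<gamma>_pos by (simp add: G_cross_def)
  ultimately show ?thesis by (simp add: G_piece_def)
qed

lemma G_nonneg: "x \<in> J N \<Longrightarrow> y \<in> J N \<Longrightarrow> G x y \<ge> 0"
  unfolding G_def using mem_J_jpt(3)[OF N_pos] by (blast intro: G_piece_nonneg)

lemma G_vertex: "G (0, 0) (0, 0) = 0"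
  using V_eq_0[of 0] u0_pos by (simp add: G_def G_piece_def G_same_def)

lemma G_diag:
  assumes "x \<in> J N"
  shows "0 \<le> G x x \<and> G x x \<le> \<gamma>"
proof -
  have "G x x = \<gamma> - (Phi (snd x) - V (snd x))" by (simp add: G_def G_piece_def G_same_def Phi_0)
  then show ?thesis
    using Phi_minus_V_le[OF mem_J_jpt(3)[OF N_pos assms]] V_le_Phi[of "snd x"] by simp
qed

subsection \<open>The Hamiltonian inequality\<close>

lemma H_above_minus_phi_minus:
  assumes "\<alpha> < N" and "s \<ge> 0" and "- phi (- s) \<le> P"
  shows "A\<^sub>0 + 2 * L * s / (1 + \<gamma>) \<le> H \<alpha> P"
proof -
  define \<sigma> where "\<sigma> = 2 * L * s / (1 + \<gamma>)"
  have \<sigma>: "\<sigma> \<ge> 0" using assms L_ge_1 \<gamma>_pos by (simp add: \<sigma>_def)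
  have Y: "staircase c \<sigma> \<ge> 0" by (rule staircase_nonneg[of c, OF c_nonneg])
  have "a + staircase c \<sigma> \<le> P"
    using assms(3) minus_phi_minus[OF assms(2)] M_pos assms(2) unfolding \<sigma>_def
    by (smt (verit) mult_nonneg_nonneg)
  then have "h (a + staircase c \<sigma>) \<le> H \<alpha> P"
    using a_pos Y h_le_H[OF assms(1), of P] h_mono[of "a + staircase c \<sigma>" P] by linarith
  then show ?thesis using h_a_plus_staircase_ge[OF \<sigma>] unfolding \<sigma>_def by linarith
qed

lemma minus_phi_minus_ge_a: "s \<ge> 0 \<Longrightarrow> a \<le> - phi (- s)"
  using phi_mono[of "- s" 0] phi_0 by simp

text \<open>The mixed term \<open>st/(1+\<gamma>)\<close> costs at most \<open>Ls/(1+\<gamma>)\<close> on the \<open>y\<close>-side, half of the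
  gain \<open>2Ls/(1+\<gamma>)\<close> on the \<open>x\<close>-side; likewise the cap \<open>S\<close> on \<open>\<phi>\<^sup>+\<close> is half of
  \<open>h(t/(1+\<gamma>)) - A\<^sub>0\<close>, which the \<open>x\<close>-side dominates.\<close>

lemma hamiltonian_ineq_cross:
  assumes "\<alpha> < N" and "\<beta> < N" and "s \<ge> 0" and "t \<ge> 0" and "\<alpha> \<noteq> \<beta>"
  shows "H \<beta> (- Gt \<alpha> \<beta> s t) \<le> H \<alpha> (Gs \<alpha> \<beta> s t)"
proof -
  define q where "q = L * (s / (1 + \<gamma>))"
  have t_scaled: "t / (1 + \<gamma>) \<ge> 0" and q: "q \<ge> 0"
    using assms L_ge_1 \<gamma>_pos by (auto simp: q_def)
  have gain: "A\<^sub>0 + 2 * q \<le> H \<alpha> (Gs \<alpha> \<beta> s t)"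
    using H_above_minus_phi_minus[OF assms(1,3), of "Gs \<alpha> \<beta> s t"] t_scaled assms(5)
    by (simp add: Gs_def q_def)
  have "h (t / (1 + \<gamma>)) \<le> h (Gs \<alpha> \<beta> s t)"
    using minus_phi_minus_ge_a[OF assms(3)] a_pos t_scaled assms(5)
    by (intro h_mono) (auto simp: Gs_def)
  also have "\<dots> \<le> H \<alpha> (Gs \<alpha> \<beta> s t)"
    using h_le_H[OF assms(1)] minus_phi_minus_ge_a[OF assms(3)] a_pos t_scaled assms(5)
    by (auto simp: Gs_def)
  finally have gain_t: "h (t / (1 + \<gamma>)) \<le> H \<alpha> (Gs \<alpha> \<beta> s t)" .
  have "Gt \<alpha> \<beta> s t \<ge> 0" using assms(3,5) \<gamma>_pos by (simp add: Gt_def)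
  then have "H \<beta> (- Gt \<alpha> \<beta> s t) \<le> A\<^sub>0 + L * Gt \<alpha> \<beta> s t"
    using H_le_A0_plus[OF assms(2), of "- Gt \<alpha> \<beta> s t"] by simp
  also have "\<dots> \<le> A\<^sub>0 + L * S t + q"
    using max_phi_le_S[OF assms(4)] L_ge_1 assms(5)
    by (simp add: Gt_def q_def distrib_left mult_left_mono)
  also have "\<dots> = A\<^sub>0 + max 0 ((h (t / (1 + \<gamma>)) - A\<^sub>0) / 2) + q"
    using L_times_S[OF assms(4)] by simp
  finally show ?thesis
    using gain gain_t q
    by (cases "A\<^sub>0 \<le> h (t / (1 + \<gamma>))") (simp_all add: max_def diff_divide_distrib)
qed

lemma hamiltonian_ineq_same:
  assumes "\<alpha> < N" and "s \<ge> 0" and "t \<ge> 0"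
  shows "H \<alpha> (- Gt \<alpha> \<alpha> s t) \<le> H \<alpha> (Gs \<alpha> \<alpha> s t)"
proof (cases "phi t \<ge> 0")
  case True
  then show ?thesis by (simp add: Gt_def Gs_def)
next
  case False
  have "phi (t - s) \<le> phi t" using phi_mono assms by simp
  then have "0 \<le> - Gt \<alpha> \<alpha> s t" "- Gt \<alpha> \<alpha> s t \<le> Gs \<alpha> \<alpha> s t"
    using False by (auto simp: Gt_def Gs_def)
  then show ?thesis by (rule H_mono[OF assms(1)])
qed

lemma grad_G_left:
  assumes "x \<in> J N" and "y \<in> J N"
  shows "grad (\<lambda>x'. G x' y) x =
    (\<lambda>\<alpha>'. if snd x = 0 then Gs \<alpha>' (fst y) 0 (snd y) else Gs (fst x) (fst y) (snd x) (snd y))"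
  using mem_J_jpt[OF N_pos assms(1)] mem_J_jpt(1)[OF N_pos assms(2)]
    bderiv_G_left[of _ "fst y" "snd y"]
  by (auto simp: grad_def)

lemma grad_G_right:
  assumes "x \<in> J N" and "y \<in> J N"
  shows "grad (G x) y =
    (\<lambda>\<beta>'. if snd y = 0 then Gt (fst x) \<beta>' (snd x) 0 else Gt (fst x) (fst y) (snd x) (snd y))"
  using mem_J_jpt[OF N_pos assms(2)] mem_J_jpt(1)[OF N_pos assms(1)]
    bderiv_G_right[of _ "fst x" "snd x"]
  by (auto simp: grad_def)

lemma Gt_left_vertex: "Gt \<alpha> \<beta> 0 t = max (phi t) 0"
  by (simp add: Gt_def max_def min_def)

lemma Gs_right_vertex: "Gs \<alpha> \<beta> s 0 = - phi (- s)"
  by (simp add: Gs_def)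

lemma Gs_left_vertex_same: "Gs \<beta> \<beta> 0 t = - phi t"
  by (simp add: Gs_def)

lemma Gt_right_vertex_same: "Gt \<alpha> \<alpha> s 0 = phi (- s) + a"
  using a_pos by (simp add: Gt_def phi_0)

lemma Gt_right_vertex_cross: "\<alpha> \<noteq> \<beta> \<Longrightarrow> Gt \<alpha> \<beta> s 0 = s / (1 + \<gamma>)"
  using a_pos by (simp add: Gt_def phi_0)

lemma FA_right_vertex_le:
  assumes "\<alpha> < N" and "s \<ge> 0"
  shows "FA N H (A\<^sub>0 + \<gamma>) (\<lambda>\<beta>. - Gt \<alpha> \<beta> s 0) \<le> H \<alpha> (- phi (- s)) + \<gamma>"
proof (rule FA_le[OF N_pos])
  define q where "q = L * (s / (1 + \<gamma>))"
  have s: "s / (1 + \<gamma>) \<ge> 0" and q: "q \<ge> 0"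
    using assms(2) L_ge_1 \<gamma>_pos by (auto simp: q_def)
  have gain: "A\<^sub>0 + 2 * q \<le> H \<alpha> (- phi (- s))"
    using H_above_minus_phi_minus[OF assms, of "- phi (- s)"] by (simp add: q_def)
  with q show "A\<^sub>0 + \<gamma> \<le> H \<alpha> (- phi (- s)) + \<gamma>" by linarith
  fix \<beta> assume \<beta>: "\<beta> < N"
  show "H \<beta> (min (- Gt \<alpha> \<beta> s 0) 0) \<le> H \<alpha> (- phi (- s)) + \<gamma>"
  proof (cases "\<beta> = \<alpha>")
    case True
    have "phi (- s) + a \<le> 0" using phi_mono[of "- s" 0] assms(2) phi_0 by simp
    then have "min (- Gt \<alpha> \<beta> s 0) 0 = 0" using True by (simp add: Gt_right_vertex_same)
    then show ?thesis using H_0_le_A0[OF \<beta>] gain q \<gamma>_pos by simp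
  next
    case False
    then have "H \<beta> (min (- Gt \<alpha> \<beta> s 0) 0) = H \<beta> (- (s / (1 + \<gamma>)))"
      using s by (simp add: Gt_right_vertex_cross)
    also have "\<dots> \<le> A\<^sub>0 + q"
      using H_le_A0_plus[OF \<beta>, of "- (s / (1 + \<gamma>))"] s
      unfolding q_def by (simp only: abs_minus_cancel abs_of_nonneg)
    finally show ?thesis using gain q \<gamma>_pos by linarith
  qed
qed

lemma G_hamiltonian_ineq:
  assumes "x \<in> J N" and "y \<in> J N"
  shows "Hb N H (A\<^sub>0 + \<gamma>) y (\<lambda>\<beta>. - grad (G x) y \<beta>) - Hb N H (A\<^sub>0 + \<gamma>) x (grad (\<lambda>x'. G x' y) x) \<le> \<gamma>"
proof -
  obtain \<alpha> s where x: "x = (\<alpha>, s)" by (cases x)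
  obtain \<beta> t where y: "y = (\<beta>, t)" by (cases y)
  have \<alpha>: "\<alpha> < N" "s \<ge> 0" and \<beta>: "\<beta> < N" "t \<ge> 0"
    using assms x y N_pos unfolding J_def by auto
  note grads = grad_G_left[OF assms] grad_G_right[OF assms]
  consider "s = 0" "t = 0" | "s = 0" "t \<noteq> 0" | "s \<noteq> 0" "t = 0" | "s \<noteq> 0" "t \<noteq> 0" by blast
  then show ?thesis
  proof cases
    case 1
    have "FA N H (A\<^sub>0 + \<gamma>) (\<lambda>\<beta>. - Gt \<alpha> \<beta> 0 0) \<le> A\<^sub>0 + \<gamma>"
      using H_0_le_A0 \<gamma>_pos phi_0 a_pos
      by (intro FA_le[OF N_pos]) (auto simp: Gt_left_vertex intro: add_increasing2)
    moreover have "A\<^sub>0 + \<gamma> \<le> FA N H (A\<^sub>0 + \<gamma>) (\<lambda>\<alpha>'. Gs \<alpha>' \<beta> 0 0)" by (simp add: FA_def)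
    ultimately show ?thesis using 1 x y grads \<gamma>_pos by (simp add: Hb_def)
  next
    case 2
    have "H \<beta> (min (Gs \<beta> \<beta> 0 t) 0) \<le> FA N H (A\<^sub>0 + \<gamma>) (\<lambda>\<alpha>'. Gs \<alpha>' \<beta> 0 t)"
      by (rule FA_ge_term[OF \<beta>(1), where p = "\<lambda>\<alpha>'. Gs \<alpha>' \<beta> 0 t"])
    moreover have "- Gt \<alpha> \<beta> 0 t = min (Gs \<beta> \<beta> 0 t) 0"
      by (simp add: Gt_left_vertex Gs_left_vertex_same)
    ultimately show ?thesis using 2 x y grads \<gamma>_pos by (simp add: Hb_def)
  next
    case 3
    then show ?thesis
      using FA_right_vertex_le[OF \<alpha>] x y grads by (simp add: Hb_def Gs_right_vertex)
  next
    case 4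
    have "H \<beta> (- Gt \<alpha> \<beta> s t) \<le> H \<alpha> (Gs \<alpha> \<beta> s t)"
      using hamiltonian_ineq_same[OF \<alpha> \<beta>(2)] hamiltonian_ineq_cross[OF \<alpha>(1) \<beta>(1) \<alpha>(2) \<beta>(2)]
      by (cases "\<alpha> = \<beta>") auto
    then show ?thesis using 4 x y grads \<gamma>_pos by (simp add: Hb_def)
  qed
qed

subsection \<open>Superlinear growth and bounded gradients\<close>

definition "g_lower d = min (M * (d / 2)\<^sup>2 / 2) (V (d / 2)) - 2 * \<gamma>"

lemma g_lower_mono: "mono_on {0..} g_lower"
proof (rule mono_onI)
  fix d d' :: real assume "d \<in> {0..}" and "d \<le> d'"
  then have "(d / 2)\<^sup>2 \<le> (d' / 2)\<^sup>2" by (intro power_mono) auto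
  then have "M * (d / 2)\<^sup>2 / 2 \<le> M * (d' / 2)\<^sup>2 / 2" using M_pos by simp
  moreover have "V (d / 2) \<le> V (d' / 2)" using V_mono \<open>d \<le> d'\<close> by simp
  ultimately show "g_lower d \<le> g_lower d'" unfolding g_lower_def by linarith
qed

text \<open>On each piece one of \<open>s - t\<close>, \<open>t - s\<close> (same branch) or \<open>s\<close>, \<open>t\<close> (different
  branches) is at least \<open>d/2\<close>: a large shift to the left is paid by the quadratic growth of
  \<open>\<Phi>\<close> on the negative half-line, a large one to the right by \<open>V\<close>.\<close>

lemma g_lower_le_G_piece:
  assumes "s \<ge> 0" and "t \<ge> 0"
  shows "g_lower (if \<alpha> = \<beta> then \<bar>s - t\<bar> else s + t) \<le> G_piece \<alpha> \<beta> s t"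
proof (cases "\<alpha> = \<beta>")
  case True
  define d where "d = \<bar>s - t\<bar>"
  have G: "Phi (t - s) - \<gamma> \<le> G_piece \<alpha> \<beta> s t"
    using True Phi_minus_V_le[OF assms(2)] by (simp add: G_piece_def G_same_def)
  show ?thesis
  proof (cases "t \<le> s")
    case ts: True
    have "M * (s - t)\<^sup>2 / 2 \<le> Phi (- (s - t))" by (rule Phi_neg_ge(1)) (use ts in simp)
    moreover have "(d / 2)\<^sup>2 \<le> (s - t)\<^sup>2" using ts by (simp add: d_def power_mono)
    then have "M * (d / 2)\<^sup>2 / 2 \<le> M * (s - t)\<^sup>2 / 2" using M_pos by simp
    ultimately show ?thesis
      using G True \<gamma>_pos unfolding g_lower_def d_def[symmetric] by (simp add: min_le_iff_disj)
  next
    case ts: False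
    have "V (d / 2) \<le> V (t - s)" using ts by (intro V_mono) (simp add: d_def)
    then have "V (d / 2) \<le> Phi (t - s)" using V_le_Phi[of "t - s"] by linarith
    then show ?thesis
      using G True \<gamma>_pos unfolding g_lower_def d_def[symmetric] by (simp add: min_le_iff_disj)
  qed
next
  case False
  define d where "d = s + t"
  have G: "Phi (- s) - \<gamma> + V t \<le> G_piece \<alpha> \<beta> s t"
    using False assms \<gamma>_pos by (simp add: G_piece_def G_cross_def)
  show ?thesis
  proof (cases "t \<le> s")
    case ts: True
    have "(d / 2)\<^sup>2 \<le> s\<^sup>2" using ts assms by (intro power_mono) (auto simp: d_def)
    then have "M * (d / 2)\<^sup>2 / 2 \<le> M * s\<^sup>2 / 2" using M_pos by simp
    then show ?thesis
      using G False Phi_neg_ge(1)[OF assms(1)] V_nonneg[of t] \<gamma>_pos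
      unfolding g_lower_def d_def[symmetric] by (simp add: min_le_iff_disj)
  next
    case ts: False
    have "V (d / 2) \<le> V t" using ts by (intro V_mono) (simp add: d_def)
    then show ?thesis
      using G False Phi_neg_ge(2)[OF assms(1)] \<gamma>_pos
      unfolding g_lower_def d_def[symmetric] by (simp add: min_le_iff_disj)
  qed
qed

lemma g_lower_superlinear: "filterlim (\<lambda>d. g_lower d / d) at_top at_top"
  unfolding filterlim_at_top
proof
  fix Z :: real
  define B where "B = 4 * (\<bar>Z\<bar> + 2 * \<gamma> + 1)"
  have B: "B \<ge> 0" using \<gamma>_pos by (simp add: B_def)
  obtain R where R: "R \<ge> u\<^sub>0" "B \<le> phi R" using phi_unbounded by blast
  have "Z \<le> g_lower d / d" if d: "d \<ge> max 1 (max (4 * R) (2 * B / M))" for d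
  proof -
    have d1: "d \<ge> 1" "d \<ge> 4 * R" "d \<ge> 2 * B / M" using d by auto
    have dR: "d / 4 \<le> d / 2 - R" using d1 by simp
    have "d / 4 * B \<le> (d / 2 - R) * B" using dR B by (intro mult_right_mono) auto
    also have "\<dots> \<le> (d / 2 - R) * phi R" using R dR d1 u0_pos by (intro mult_left_mono) auto
    also have "\<dots> \<le> V (d / 2)" by (rule V_ge_linear[OF R(1)]) (use d1 R u0_pos in simp)
    finally have V: "d / 4 * B \<le> V (d / 2)" .
    have "2 * B \<le> M * d" using d1(3) M_pos by (simp add: field_simps)
    then have "2 * B * d \<le> M * d * d" using d1 by (intro mult_right_mono) auto
    then have "d / 4 * B \<le> M * (d / 2)\<^sup>2 / 2" by (simp add: power2_eq_square field_simps)
    with V have "d / 4 * B - 2 * \<gamma> \<le> g_lower d" unfolding g_lower_def by linarith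
    moreover have "d / 4 * B = d * \<bar>Z\<bar> + d * (2 * \<gamma>) + d" by (simp add: B_def algebra_simps)
    moreover have "2 * \<gamma> \<le> d * (2 * \<gamma>)" using d1 \<gamma>_pos by simp
    moreover have "Z * d \<le> d * \<bar>Z\<bar>" using d1 by (simp add: mult.commute mult_left_mono)
    ultimately have "Z * d \<le> g_lower d" using d1(1) by linarith
    then show ?thesis using d1 by (simp add: pos_le_divide_eq)
  qed
  then show "\<forall>\<^sub>F d in at_top. Z \<le> g_lower d / d"
    unfolding eventually_at_top_linorder by blast
qed

lemma G_superlinear_minorant:
  "\<exists>g. mono_on {0..} g \<and> (\<forall>x\<in>J N. \<forall>y\<in>J N. g (dJ x y) \<le> G x y) \<and>
       filterlim (\<lambda>a. g a / a) at_top at_top"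
proof (intro exI[of _ g_lower] conjI ballI g_lower_mono g_lower_superlinear)
  fix x y assume "x \<in> J N" "y \<in> J N"
  then have x: "x = jpt (fst x) (snd x)" "snd x \<ge> 0" and y: "y = jpt (fst y) (snd y)" "snd y \<ge> 0"
    using mem_J_jpt[OF N_pos] by blast+
  have "dJ x y = (if fst x = fst y then \<bar>snd x - snd y\<bar> else snd x + snd y)"
    using dJ_jpt[OF x(2) y(2), of "fst x" "fst y"] x(1) y(1) by simp
  then show "g_lower (dJ x y) \<le> G x y" unfolding G_def by (simp add: g_lower_le_G_piece x(2) y(2))
qed

definition "grad_bound K = \<bar>phi (- K)\<bar> + \<bar>phi K\<bar> + a + K"

lemma phi_abs_le:
  assumes "\<bar>u\<bar> \<le> K"
  shows "\<bar>phi u\<bar> \<le> \<bar>phi (- K)\<bar> + \<bar>phi K\<bar>"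
  using phi_mono[of "- K" u] phi_mono[of u K] assms by linarith

lemma Gs_Gt_bounded:
  assumes "s \<ge> 0" and "t \<ge> 0" and "(if \<alpha> = \<beta> then \<bar>s - t\<bar> else s + t) \<le> K"
  shows "\<bar>Gs \<alpha> \<beta> s t\<bar> \<le> grad_bound K" and "\<bar>Gt \<alpha> \<beta> s t\<bar> \<le> grad_bound K"
proof -
  let ?P = "\<bar>phi (- K)\<bar> + \<bar>phi K\<bar>"
  have K: "K \<ge> 0" using assms by (auto split: if_splits)
  have "\<bar>Gs \<alpha> \<beta> s t\<bar> \<le> ?P + a + K \<and> \<bar>Gt \<alpha> \<beta> s t\<bar> \<le> ?P + a + K"
  proof (cases "\<alpha> = \<beta>")
    case True
    then have "\<bar>phi (t - s)\<bar> \<le> ?P" using assms(3) by (intro phi_abs_le) auto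
    moreover have "- a \<le> min (phi t) 0" "min (phi t) 0 \<le> 0" using phi_ge[OF assms(2)] a_pos by auto
    ultimately show ?thesis using True K a_pos by (auto simp: Gs_def Gt_def abs_le_iff)
  next
    case False
    then have "\<bar>phi (- s)\<bar> \<le> ?P" "\<bar>phi t\<bar> \<le> ?P" using assms by (auto intro!: phi_abs_le)
    moreover have "0 \<le> t / (1 + \<gamma>)" "t / (1 + \<gamma>) \<le> t" "0 \<le> s / (1 + \<gamma>)" "s / (1 + \<gamma>) \<le> s"
      using assms(1,2) \<gamma>_pos by (simp_all add: field_simps)
    ultimately show ?thesis
      using False assms a_pos by (auto simp: Gs_def Gt_def abs_le_iff max_def)
  qed
  then show "\<bar>Gs \<alpha> \<beta> s t\<bar> \<le> grad_bound K" and "\<bar>Gt \<alpha> \<beta> s t\<bar> \<le> grad_bound K"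
    by (simp_all add: grad_bound_def)
qed

lemma G_grad_bounded:
  "\<forall>K\<ge>0. \<exists>C. \<forall>x\<in>J N. \<forall>y\<in>J N. dJ x y \<le> K \<longrightarrow>
     gnorm N (grad (\<lambda>x'. G x' y) x) + gnorm N (grad (G x) y) \<le> C"
proof (intro allI impI exI[of _ "2 * grad_bound _"] ballI)
  fix K :: real and x y assume xy: "x \<in> J N" "y \<in> J N" and d: "dJ x y \<le> K"
  have x: "x = jpt (fst x) (snd x)" "snd x \<ge> 0" and y: "y = jpt (fst y) (snd y)" "snd y \<ge> 0"
    using mem_J_jpt[OF N_pos] xy by blast+
  have dist: "(if fst x = fst y then \<bar>snd x - snd y\<bar> else snd x + snd y) \<le> K"
    using d dJ_jpt[OF x(2) y(2), of "fst x" "fst y"] x(1) y(1) by simp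
  have "\<bar>Gs \<alpha>' (fst y) 0 (snd y)\<bar> \<le> grad_bound K" if "snd x = 0" for \<alpha>'
    using Gs_Gt_bounded(1)[of 0 "snd y" \<alpha>' "fst y" K] dist that y(2) by (auto split: if_splits)
  then have "gnorm N (grad (\<lambda>x'. G x' y) x) \<le> grad_bound K"
    unfolding grad_G_left[OF xy] using Gs_Gt_bounded(1)[OF x(2) y(2) dist]
    by (intro gnorm_le[OF N_pos]) auto
  moreover have "\<bar>Gt (fst x) \<beta>' (snd x) 0\<bar> \<le> grad_bound K" if "snd y = 0" for \<beta>'
    using Gs_Gt_bounded(2)[of "snd x" 0 "fst x" \<beta>' K] dist that x(2) by (auto split: if_splits)
  then have "gnorm N (grad (G x) y) \<le> grad_bound K"
    unfolding grad_G_right[OF xy] using Gs_Gt_bounded(2)[OF x(2) y(2) dist]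
    by (intro gnorm_le[OF N_pos]) auto
  ultimately show "gnorm N (grad (\<lambda>x'. G x' y) x) + gnorm N (grad (G x) y) \<le> 2 * grad_bound K"
    by simp
qed

lemma min_phi_0: "t \<ge> 0 \<Longrightarrow> min (phi t) 0 = min (M * (t - u\<^sub>0)) 0"
  using S_nonneg[of t] by (auto simp: phi_of_nonneg min_def)

lemma grad_G_piece_lipschitz_same:
  assumes "s1 \<ge> 0" "t1 \<ge> 0" "\<bar>s1 - t1\<bar> \<le> K" and "s2 \<ge> 0" "t2 \<ge> 0" "\<bar>s2 - t2\<bar> \<le> K"
    and "\<bar>s1 - s2\<bar> \<le> n" "\<bar>t1 - t2\<bar> \<le> n"
  shows "\<bar>Gs \<alpha> \<alpha> s1 t1 - Gs \<alpha> \<alpha> s2 t2\<bar> + \<bar>Gt \<alpha> \<alpha> s1 t1 - Gt \<alpha> \<alpha> s2 t2\<bar> \<le> hessian_bound K / \<gamma> * n"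
proof -
  define k where "k = phi_lip_const K / \<gamma>"
  have k: "k \<ge> 0" using phi_lip_const_nonneg \<gamma>_pos by (simp add: k_def)
  have "\<bar>phi (t1 - s1) - phi (t2 - s2)\<bar> \<le> k * \<bar>(t1 - s1) - (t2 - s2)\<bar>"
    using phi_lipschitz[of "t1 - s1" K "t2 - s2"] assms(3,6) by (simp add: k_def abs_minus_commute)
  also have "\<dots> \<le> k * (2 * n)" using assms(7,8) k by (intro mult_left_mono) auto
  finally have p: "\<bar>phi (t1 - s1) - phi (t2 - s2)\<bar> \<le> k * (2 * n)" .
  have "\<bar>min (M * (t1 - u\<^sub>0)) 0 - min (M * (t2 - u\<^sub>0)) 0\<bar> \<le> \<bar>M * (t1 - u\<^sub>0) - M * (t2 - u\<^sub>0)\<bar>"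
    by linarith
  also have "\<dots> \<le> M * n"
    using M_pos assms(8) by (simp add: abs_mult right_diff_distrib[symmetric])
  finally have m: "\<bar>min (phi t1) 0 - min (phi t2) 0\<bar> \<le> M * n"
    using min_phi_0[OF assms(2)] min_phi_0[OF assms(5)] by simp
  have "\<bar>Gs \<alpha> \<alpha> s1 t1 - Gs \<alpha> \<alpha> s2 t2\<bar> \<le> k * (2 * n)"
    using p by (simp add: Gs_def abs_minus_commute)
  moreover have "\<bar>Gt \<alpha> \<alpha> s1 t1 - Gt \<alpha> \<alpha> s2 t2\<bar> \<le> k * (2 * n) + M * n"
    using p m unfolding Gt_def by (simp add: abs_le_iff)
  ultimately have "\<bar>Gs \<alpha> \<alpha> s1 t1 - Gs \<alpha> \<alpha> s2 t2\<bar> + \<bar>Gt \<alpha> \<alpha> s1 t1 - Gt \<alpha> \<alpha> s2 t2\<bar>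
      \<le> (4 * k + M) * n"
    by (simp add: algebra_simps)
  also have "\<dots> \<le> hessian_bound K / \<gamma> * n"
    using \<gamma>_pos phi_lip_const_nonneg assms(7)
    by (intro mult_right_mono) (auto simp: k_def M_def hessian_bound_def field_simps)
  finally show ?thesis .
qed

lemma grad_G_piece_lipschitz_cross:
  assumes "\<alpha> \<noteq> \<beta>" and "s1 \<ge> 0" "t1 \<ge> 0" "s1 + t1 \<le> K" and "s2 \<ge> 0" "t2 \<ge> 0" "s2 + t2 \<le> K"
    and "\<bar>s1 - s2\<bar> \<le> n" "\<bar>t1 - t2\<bar> \<le> n"
  shows "\<bar>Gs \<alpha> \<beta> s1 t1 - Gs \<alpha> \<beta> s2 t2\<bar> + \<bar>Gt \<alpha> \<beta> s1 t1 - Gt \<alpha> \<beta> s2 t2\<bar> \<le> hessian_bound K / \<gamma> * n"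
proof -
  define k where "k = phi_lip_const K / \<gamma>"
  have k: "k \<ge> 0" using phi_lip_const_nonneg \<gamma>_pos by (simp add: k_def)
  have scaled: "\<bar>u1 / (1 + \<gamma>) - u2 / (1 + \<gamma>)\<bar> \<le> n / \<gamma>" if "\<bar>u1 - u2\<bar> \<le> n" for u1 u2
  proof -
    have "\<bar>u1 / (1 + \<gamma>) - u2 / (1 + \<gamma>)\<bar> = \<bar>u1 - u2\<bar> / (1 + \<gamma>)"
      using \<gamma>_pos by (simp add: diff_divide_distrib[symmetric])
    also have "\<dots> \<le> n / (1 + \<gamma>)" using that \<gamma>_pos by (intro divide_right_mono) auto
    also have "\<dots> \<le> n / \<gamma>" using that \<gamma>_pos by (intro divide_left_mono) auto
    finally show ?thesis .
  qed
  have "\<bar>phi (- s1) - phi (- s2)\<bar> \<le> k * \<bar>- s1 - - s2\<bar>"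
    using phi_lipschitz[of "- s1" K "- s2"] assms(2-7) by (simp add: k_def)
  also have "\<dots> \<le> k * n" using assms(8) k by (intro mult_left_mono) auto
  finally have p1: "\<bar>phi (- s1) - phi (- s2)\<bar> \<le> k * n" .
  have "\<bar>max (phi t1) 0 - max (phi t2) 0\<bar> \<le> \<bar>phi t1 - phi t2\<bar>" by linarith
  also have "\<dots> \<le> k * \<bar>t1 - t2\<bar>"
    using phi_lipschitz[of t1 K t2] assms(2-7) by (simp add: k_def)
  also have "\<dots> \<le> k * n" using assms(9) k by (intro mult_left_mono) auto
  finally have p2: "\<bar>max (phi t1) 0 - max (phi t2) 0\<bar> \<le> k * n" .
  have "\<bar>Gs \<alpha> \<beta> s1 t1 - Gs \<alpha> \<beta> s2 t2\<bar> \<le> k * n + n / \<gamma>"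
    using p1 scaled[OF assms(9)] assms(1) unfolding Gs_def by (simp add: abs_le_iff)
  moreover have "\<bar>Gt \<alpha> \<beta> s1 t1 - Gt \<alpha> \<beta> s2 t2\<bar> \<le> k * n + n / \<gamma>"
    using p2 scaled[OF assms(8)] assms(1) unfolding Gt_def by (simp add: abs_le_iff)
  ultimately have "\<bar>Gs \<alpha> \<beta> s1 t1 - Gs \<alpha> \<beta> s2 t2\<bar> + \<bar>Gt \<alpha> \<beta> s1 t1 - Gt \<alpha> \<beta> s2 t2\<bar>
      \<le> (k * n + n / \<gamma>) + (k * n + n / \<gamma>)"
    by (rule add_mono)
  also have "\<dots> = (2 * phi_lip_const K + 2) / \<gamma> * n"
    by (simp add: k_def algebra_simps add_divide_distrib)
  also have "\<dots> \<le> hessian_bound K / \<gamma> * n"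
    using \<gamma>_pos phi_lip_const_nonneg assms(8) a_pos
    by (intro mult_right_mono divide_right_mono) (auto simp: hessian_bound_def)
  finally show ?thesis .
qed

lemma C11_on_G: "C11_on N G K (hessian_bound K / \<gamma>)"
  unfolding C11_on_def
proof (intro allI impI conjI ballI)
  fix \<alpha> \<beta>
  have piece: "fst z \<ge> 0 \<and> snd z \<ge> 0 \<and> (if \<alpha> = \<beta> then \<bar>fst z - snd z\<bar> else fst z + snd z) \<le> K"
    if "z \<in> piece \<alpha> \<beta> K" for z
    using that dJ_jpt unfolding piece_def by auto
  have DG: "DG G \<alpha> \<beta> z = (Gs \<alpha> \<beta> (fst z) (snd z), Gt \<alpha> \<beta> (fst z) (snd z))"
    if "z \<in> piece \<alpha> \<beta> K" for z
    using piece[OF that] by (simp add: DG_def bderiv_G_left bderiv_G_right)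
  fix z assume z: "z \<in> piece \<alpha> \<beta> K"
  show "((\<lambda>w. G (jpt \<alpha> (fst w)) (jpt \<beta> (snd w))) has_derivative
      (\<lambda>h. fst h * fst (DG G \<alpha> \<beta> z) + snd h * snd (DG G \<alpha> \<beta> z))) (at z within piece \<alpha> \<beta> K)"
    using G_piece_has_derivative by (simp add: G_jpt DG[OF z])
  fix w assume w: "w \<in> piece \<alpha> \<beta> K"
  have dz: "\<bar>fst z - fst w\<bar> \<le> norm (z - w)" "\<bar>snd z - snd w\<bar> \<le> norm (z - w)"
    using dist_fst_le[of z w] dist_snd_le[of z w] by (simp_all add: dist_real_def dist_norm)
  have "\<bar>Gs \<alpha> \<beta> (fst z) (snd z) - Gs \<alpha> \<beta> (fst w) (snd w)\<bar>
      + \<bar>Gt \<alpha> \<beta> (fst z) (snd z) - Gt \<alpha> \<beta> (fst w) (snd w)\<bar> \<le> hessian_bound K / \<gamma> * norm (z - w)"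
  proof (cases "\<alpha> = \<beta>")
    case True
    with piece[OF z] piece[OF w] dz show ?thesis
      unfolding True by (intro grad_G_piece_lipschitz_same) auto
  next
    case False
    with piece[OF z] piece[OF w] dz show ?thesis
      by (intro grad_G_piece_lipschitz_cross) auto
  qed
  moreover have "norm (DG G \<alpha> \<beta> z - DG G \<alpha> \<beta> w)
      \<le> \<bar>Gs \<alpha> \<beta> (fst z) (snd z) - Gs \<alpha> \<beta> (fst w) (snd w)\<bar>
        + \<bar>Gt \<alpha> \<beta> (fst z) (snd z) - Gt \<alpha> \<beta> (fst w) (snd w)\<bar>"
    using norm_Pair_le[of "Gs \<alpha> \<beta> (fst z) (snd z) - Gs \<alpha> \<beta> (fst w) (snd w)"
        "Gt \<alpha> \<beta> (fst z) (snd z) - Gt \<alpha> \<beta> (fst w) (snd w)"]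
    by (simp add: DG[OF z] DG[OF w])
  ultimately show "norm (DG G \<alpha> \<beta> z - DG G \<alpha> \<beta> w) \<le> hessian_bound K / \<gamma> * norm (z - w)"
    by linarith
qed

lemma vertex_test_G: "vertex_test N H \<gamma> G"
  unfolding vertex_test_def
proof (intro conjI)
  show "\<forall>\<alpha><N. \<forall>\<beta><N. continuous_on ({0..} \<times> {0..}) (\<lambda>z. G (jpt \<alpha> (fst z)) (jpt \<beta> (snd z)))"
    by (simp add: G_jpt G_piece_continuous)
  show "\<forall>x\<in>J N. C1J N (G x)" and "\<forall>y\<in>J N. C1J N (\<lambda>x. G x y)"
    using C1J_G_left C1J_G_right by blast+
  show "\<forall>x\<in>J N. \<forall>y\<in>J N. 0 \<le> G x y" and "\<forall>x\<in>J N. 0 \<le> G x x \<and> G x x \<le> \<gamma>"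
    using G_nonneg G_diag by blast+
  show "\<forall>x\<in>J N. \<forall>y\<in>J N. Hb N H (A\<^sub>0 + \<gamma>) y (\<lambda>\<beta>. - grad (G x) y \<beta>)
      - Hb N H (A\<^sub>0 + \<gamma>) x (grad (\<lambda>x'. G x' y) x) \<le> \<gamma>"
    using G_hamiltonian_ineq by blast
qed (fact G_vertex G_superlinear_minorant G_grad_bounded)+

end

lemma hamiltonians_vertex_test_data:
  assumes "N \<ge> 1" and "hamiltonians N H" and "\<And>\<alpha> p. \<alpha> < N \<Longrightarrow> H \<alpha> 0 \<le> H \<alpha> p"
  obtains L h a c where "vertex_test_data N H L h a c"
proof -
  obtain L where L: "L \<ge> 1" and H_lip: "\<And>\<alpha> p q. \<alpha> < N \<Longrightarrow> \<bar>H \<alpha> p - H \<alpha> q\<bar> \<le> L * \<bar>p - q\<bar>"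
    using hamiltonians_uniform_lipschitz[OF assms(2)] by blast
  have H_mono: "H \<alpha> p \<le> H \<alpha> q" if "\<alpha> < N" "0 \<le> p" "p \<le> q" for \<alpha> p q
    by (rule hamiltonians_mono[OF assms(2) that(1) assms(3)[OF that(1)] that(2,3)])
  define h where "h = lower_envelope N H"
  have h_coercive: "\<exists>R. \<forall>p\<ge>R. B \<le> h p" for B
    unfolding h_def by (rule lower_envelope_coercive[OF assms(1,2)])
  obtain a c where a: "a > 0" "A0 N H + 1 \<le> h a"
    and c: "\<And>n. c n \<ge> 0" "\<And>n. A0 N H + real n + 2 \<le> h (a + c n)"
    using coercive_levels[OF h_coercive] by blast
  show thesis
  proof (rule that[of L h a c], unfold_locales)
    show "\<bar>h p - h q\<bar> \<le> L * \<bar>p - q\<bar>" for p q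
      unfolding h_def by (rule lower_envelope_lipschitz[OF assms(1)]) (rule H_lip)
    show "h p \<le> h q" if "0 \<le> p" "p \<le> q" for p q
      unfolding h_def by (rule lower_envelope_mono[OF assms(1)]) (rule H_mono[OF _ that])
    show "h p \<le> H \<alpha> p" if "\<alpha> < N" for \<alpha> p
      unfolding h_def by (rule lower_envelope_le[OF assms(1) that])
    show "H \<alpha> 0 \<le> A0 N H" if "\<alpha> < N" for \<alpha>
      by (rule hamiltonians_min_le_A0[OF that]) (rule assms(3)[OF that])
  qed (use assms(1) L a c H_mono H_lip h_coercive in blast)+
qed

theorem proposition5p1:
  fixes N :: nat and H :: "nat \<Rightarrow> real \<Rightarrow> real"
  assumes "N \<ge> 1"
    and "hamiltonians N H"
    and "\<forall>\<alpha><N. \<forall>p. H \<alpha> 0 \<le> H \<alpha> p"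
  shows "\<exists>C :: real \<Rightarrow> real. \<forall>\<gamma>>0. \<exists>G. vertex_test N H \<gamma> G \<and>
           (\<forall>K>0. C11_on N G K (C K / \<gamma>))"
proof -
  obtain L h a c where data: "vertex_test_data N H L h a c"
    using hamiltonians_vertex_test_data assms by blast
  interpret vertex_test_data N H L h a c by (fact data)
  show ?thesis
  proof (intro exI[of _ hessian_bound] allI impI)
    fix \<gamma> :: real assume "\<gamma> > 0"
    with data interpret vertex_test_construction N H L h a c \<gamma>
      by (simp add: vertex_test_construction_def vertex_test_construction_axioms_def)
    show "\<exists>G. vertex_test N H \<gamma> G \<and> (\<forall>K>0. C11_on N G K (hessian_bound K / \<gamma>))"
      using vertex_test_G C11_on_G by blast
  qed
qed

end
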